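(* Let $H$ be a weak Hopf algebra with bijective antipode $S$, and in ${H_{par}^w}$ put $E_h=[h_1][S(h_2)]$ and $\tilde E_h=[S(h_1)][h_2]$. Then for all $h,k\in H$: (a) $E_k[h]=[h_2]E_{S^{-1}(h_1)k}$; (b) $[h]\tilde E_k=\tilde E_{kS^{-1}(h_2)}[h_1]$; (c) $E_k[h]=\tilde E_{S^{-1}(h_2)}E_k[h_1]$; (d) $[h]\tilde E_k=[h_2]\tilde E_kE_{S^{-1}(h_1)}$.
   Context: All algebras are associative and unital over a field $\Bbbk$; Sweedler notation $\Delta(h)=h_1\otimes h_2$. A weak Hopf algebra is $(H,m,u,\Delta,\varepsilon,S)$ with $H$ an algebra, $(H,\Delta,\varepsilon)$ a coalgebra, and for all $g,h,k$: $\Delta(kh)=\Delta(k)\Delta(h)$; $\varepsilon(kh_1)\varepsilon(h_2g)=\varepsilon(khg)=\varepsilon(kh_2)\varepsilon(h_1g)$; $(1\otimes\Delta(1))(\Delta(1)\otimes1)=\Delta^2(1)=(\Delta(1)\otimes1)(1\otimes\Delta(1))$; $h_1S(h_2)=\varepsilon(1_1h)1_2$; $S(h_1)h_2=1_1\varepsilon(h1_2)$; $S(h)=S(h_1)h_2S(h_3)$, where $\Delta(1)=1_1\otimes1_2$. ${H_{par}^w}=T(H)/I$, where $T(H)$ is the tensor algebra of the vector space $H$ and $I$ is the ideal generated by, for all $h,k\in H$: $1_H-1_{T(H)}$; $h\otimes k_1\otimes S(k_2)-hk_1\otimes S(k_2)$; $h\otimes S(k_1)\otimes k_2-hS(k_1)\otimes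 k_2$; $h_1\otimes S(h_2)\otimes k-h_1\otimes S(h_2)k$; $S(h_1)\otimes h_2\otimes k-S(h_1)\otimes h_2k$; $h-h_1\otimes S(h_2)\otimes h_3$; $[h]$ denotes the class of $h$. *)

theory Defs
  imports Main "HOL.Vector_Spaces"
begin

text \<open>An element of H (x) H (resp. H (x) H (x) H) is represented by a finite list of
  pairs (resp. triples), standing for the sum of the corresponding elementary tensors.
  Two representatives are equal as tensors iff all bilinear (resp. trilinear) forms
  into the ground field agree on them (over a field, linear functionals on a
  tensor product separate points).\<close>

definition bil :: "('k::field \<Rightarrow> 'h::ab_group_add \<Rightarrow> 'h) \<Rightarrow> ('h \<Rightarrow> 'h \<Rightarrow> 'k) \<Rightarrow> bool" where
  "bil sc f \<longleftrightarrow> (\<forall>y. Vector_Spaces.linear sc (*) (\<lambda>x. f x y))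
                 \<and> (\<forall>x. Vector_Spaces.linear sc (*) (\<lambda>y. f x y))"

definition tril :: "('k::field \<Rightarrow> 'h::ab_group_add \<Rightarrow> 'h) \<Rightarrow> ('h \<Rightarrow> 'h \<Rightarrow> 'h \<Rightarrow> 'k) \<Rightarrow> bool" where
  "tril sc f \<longleftrightarrow> (\<forall>y z. Vector_Spaces.linear sc (*) (\<lambda>x. f x y z))
                  \<and> (\<forall>x z. Vector_Spaces.linear sc (*) (\<lambda>y. f x y z))
                  \<and> (\<forall>x y. Vector_Spaces.linear sc (*) (\<lambda>z. f x y z))"

definition teq2 :: "('k::field \<Rightarrow> 'h::ab_group_add \<Rightarrow> 'h) \<Rightarrow> ('h \<times> 'h) list \<Rightarrow> ('h \<times> 'h) list \<Rightarrow> bool" where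
  "teq2 sc xs ys \<longleftrightarrow> (\<forall>f. bil sc f \<longrightarrow>
      sum_list (map (\<lambda>(a,b). f a b) xs) = sum_list (map (\<lambda>(a,b). f a b) ys))"

definition teq3 :: "('k::field \<Rightarrow> 'h::ab_group_add \<Rightarrow> 'h) \<Rightarrow> ('h \<times> 'h \<times> 'h) list \<Rightarrow> ('h \<times> 'h \<times> 'h) list \<Rightarrow> bool" where
  "teq3 sc xs ys \<longleftrightarrow> (\<forall>f. tril sc f \<longrightarrow>
      sum_list (map (\<lambda>(a,b,c). f a b c) xs) = sum_list (map (\<lambda>(a,b,c). f a b c) ys))"

text \<open>(Delta (x) id) Delta h, i.e. h_1 (x) h_2 (x) h_3 written with the first leg expanded.\<close>
definition cop2L :: "('h \<Rightarrow> ('h \<times> 'h) list) \<Rightarrow> 'h \<Rightarrow> ('h \<times> 'h \<times> 'h) list" where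
  "cop2L \<Delta> h = concat (map (\<lambda>(x,y). map (\<lambda>(u,v). (u,v,y)) (\<Delta> x)) (\<Delta> h))"

text \<open>(id (x) Delta) Delta h.\<close>
definition cop2R :: "('h \<Rightarrow> ('h \<times> 'h) list) \<Rightarrow> 'h \<Rightarrow> ('h \<times> 'h \<times> 'h) list" where
  "cop2R \<Delta> h = concat (map (\<lambda>(x,y). map (\<lambda>(u,v). (x,u,v)) (\<Delta> y)) (\<Delta> h))"

definition tmul2 :: "('h::times \<times> 'h) list \<Rightarrow> ('h \<times> 'h) list \<Rightarrow> ('h \<times> 'h) list" where
  "tmul2 xs ys = concat (map (\<lambda>(a,b). map (\<lambda>(c,d). (a*c, b*d)) ys) xs)"

definition tmul3 :: "('h::times \<times> 'h \<times> 'h) list \<Rightarrow> ('h \<times> 'h \<times> 'h) list \<Rightarrow> ('h \<times> 'h \<times> 'h) list" where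
  "tmul3 xs ys = concat (map (\<lambda>(a,b,c). map (\<lambda>(a',b',c'). (a*a', b*b', c*c')) ys) xs)"

text \<open>H is the type 'h, a unital ring with a k-vector-space structure sc making
  multiplication bilinear (a unital associative k-algebra). The comultiplication is given by
  a function choosing for each h a Sweedler representative of Delta(h).\<close>

definition weak_hopf ::
  "('k::field \<Rightarrow> 'h::ring_1 \<Rightarrow> 'h) \<Rightarrow> ('h \<Rightarrow> ('h \<times> 'h) list) \<Rightarrow> ('h \<Rightarrow> 'k) \<Rightarrow> ('h \<Rightarrow> 'h) \<Rightarrow> bool" where
  "weak_hopf sc \<Delta> \<epsilon> S \<longleftrightarrow>
     \<comment> \<open>algebra\<close>
     vector_space sc
   \<and> (\<forall>c a b. sc c (a * b) = sc c a * b \<and> sc c (a * b) = a * sc c b)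
     \<comment> \<open>coalgebra (Delta, epsilon linear; coassociative; counital)\<close>
   \<and> (\<forall>a b. teq2 sc (\<Delta> (a + b)) (\<Delta> a @ \<Delta> b))
   \<and> (\<forall>c a. teq2 sc (\<Delta> (sc c a)) (map (\<lambda>(x,y). (sc c x, y)) (\<Delta> a)))
   \<and> Vector_Spaces.linear sc (*) \<epsilon>
   \<and> (\<forall>h. teq3 sc (cop2L \<Delta> h) (cop2R \<Delta> h))
   \<and> (\<forall>h. sum_list (map (\<lambda>(x,y). sc (\<epsilon> x) y) (\<Delta> h)) = h)
   \<and> (\<forall>h. sum_list (map (\<lambda>(x,y). sc (\<epsilon> y) x) (\<Delta> h)) = h)
     \<comment> \<open>antipode is linear\<close>
   \<and> Vector_Spaces.linear sc sc S
     \<comment> \<open>Delta(kh) = Delta(k) Delta(h)\<close>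
   \<and> (\<forall>k h. teq2 sc (\<Delta> (k * h)) (tmul2 (\<Delta> k) (\<Delta> h)))
     \<comment> \<open>weak multiplicativity of the counit\<close>
   \<and> (\<forall>k h g. sum_list (map (\<lambda>(x,y). \<epsilon> (k * x) * \<epsilon> (y * g)) (\<Delta> h)) = \<epsilon> (k * h * g)
            \<and> \<epsilon> (k * h * g) = sum_list (map (\<lambda>(x,y). \<epsilon> (k * y) * \<epsilon> (x * g)) (\<Delta> h)))
     \<comment> \<open>weak comultiplicativity of the unit\<close>
   \<and> teq3 sc (tmul3 (map (\<lambda>(x,y). (1,x,y)) (\<Delta> 1)) (map (\<lambda>(x,y). (x,y,1)) (\<Delta> 1))) (cop2L \<Delta> 1)
   \<and> teq3 sc (cop2L \<Delta> 1) (tmul3 (map (\<lambda>(x,y). (x,y,1)) (\<Delta> 1)) (map (\<lambda>(x,y). (1,x,y)) (\<Delta> 1)))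
     \<comment> \<open>antipode axioms\<close>
   \<and> (\<forall>h. sum_list (map (\<lambda>(x,y). x * S y) (\<Delta> h))
          = sum_list (map (\<lambda>(x,y). sc (\<epsilon> (x * h)) y) (\<Delta> 1)))
   \<and> (\<forall>h. sum_list (map (\<lambda>(x,y). S x * y) (\<Delta> h))
          = sum_list (map (\<lambda>(x,y). sc (\<epsilon> (h * y)) x) (\<Delta> 1)))
   \<and> (\<forall>h. S h = sum_list (map (\<lambda>(a,b,c). S a * b * S c) (cop2L \<Delta> h)))"

text \<open>The free k-algebra on the set H: formal finite k-linear combinations of words
  (lists) of elements of H, represented by lists of (coefficient, word) pairs and compared
  coefficientwise. The word [h1,...,hn] stands for h1 (x) ... (x) hn. T(H) is this free algebra
  modulo the ideal generated by linearity of the letters; H_par^w = T(H)/I is therefore the free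
  algebra modulo the ideal generated by the linearity relations together with the generators of I.\<close>

type_synonym ('k,'h) fa = "('k \<times> 'h list) list"

definition fa_coeff :: "('k::comm_monoid_add,'h) fa \<Rightarrow> 'h list \<Rightarrow> 'k" where
  "fa_coeff p w = sum_list (map fst (filter (\<lambda>(c,u). u = w) p))"

definition fa_eq :: "('k::comm_monoid_add,'h) fa \<Rightarrow> ('k,'h) fa \<Rightarrow> bool" where
  "fa_eq p q \<longleftrightarrow> (\<forall>w. fa_coeff p w = fa_coeff q w)"

definition fa_mul :: "('k::times,'h) fa \<Rightarrow> ('k,'h) fa \<Rightarrow> ('k,'h) fa" where
  "fa_mul p q = concat (map (\<lambda>(c,u). map (\<lambda>(d,v). (c * d, u @ v)) q) p)"

definition fa_neg :: "('k::uminus,'h) fa \<Rightarrow> ('k,'h) fa" where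
  "fa_neg p = map (\<lambda>(c,u). (- c, u)) p"

definition fa_sub :: "('k::uminus,'h) fa \<Rightarrow> ('k,'h) fa \<Rightarrow> ('k,'h) fa" where
  "fa_sub p q = p @ fa_neg q"

definition fa_sum :: "('a \<Rightarrow> ('k,'h) fa) \<Rightarrow> 'a list \<Rightarrow> ('k,'h) fa" where
  "fa_sum f xs = concat (map f xs)"

definition fa_one :: "('k::one,'h) fa" where
  "fa_one = [(1, [])]"

text \<open>the letter h, i.e. h viewed in degree 1 of T(H)\<close>
definition gen :: "'h \<Rightarrow> ('k::one,'h) fa" where
  "gen h = [(1, [h])]"

inductive_set fa_ideal :: "('k::comm_ring_1,'h) fa set \<Rightarrow> ('k,'h) fa set" for G where
  zero: "[] \<in> fa_ideal G"
| gen_mul: "g \<in> G \<Longrightarrow> fa_mul a (fa_mul g b) \<in> fa_ideal G"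
| add: "p \<in> fa_ideal G \<Longrightarrow> q \<in> fa_ideal G \<Longrightarrow> p @ q \<in> fa_ideal G"
| eq: "p \<in> fa_ideal G \<Longrightarrow> fa_eq p q \<Longrightarrow> q \<in> fa_ideal G"

definition lin_rels :: "('k::field \<Rightarrow> 'h::ab_group_add \<Rightarrow> 'h) \<Rightarrow> ('k,'h) fa set" where
  "lin_rels sc = {fa_sub (gen (a + b)) (gen a @ gen b) | a b. True}
               \<union> {fa_sub (gen (sc c a)) [(c, [a])] | c a. True}"

definition parw_rels ::
  "('h \<Rightarrow> ('h \<times> 'h) list) \<Rightarrow> ('h \<Rightarrow> 'h) \<Rightarrow> ('k::field,'h::ring_1) fa set" where
  "parw_rels \<Delta> S =
      {fa_sub (gen 1) fa_one}
    \<union> {fa_sum (\<lambda>(x,y). fa_sub [(1,[h, x, S y])] [(1,[h * x, S y])]) (\<Delta> k) | h k. True}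
    \<union> {fa_sum (\<lambda>(x,y). fa_sub [(1,[h, S x, y])] [(1,[h * S x, y])]) (\<Delta> k) | h k. True}
    \<union> {fa_sum (\<lambda>(x,y). fa_sub [(1,[x, S y, k])] [(1,[x, S y * k])]) (\<Delta> h) | h k. True}
    \<union> {fa_sum (\<lambda>(x,y). fa_sub [(1,[S x, y, k])] [(1,[S x, y * k])]) (\<Delta> h) | h k. True}
    \<union> {fa_sub (gen h) (fa_sum (\<lambda>(a,b,c). [(1,[a, S b, c])]) (cop2L \<Delta> h)) | h. True}"

definition parw_eq ::
  "('k::field \<Rightarrow> 'h::ring_1 \<Rightarrow> 'h) \<Rightarrow> ('h \<Rightarrow> ('h \<times> 'h) list) \<Rightarrow> ('h \<Rightarrow> 'h)
     \<Rightarrow> ('k,'h) fa \<Rightarrow> ('k,'h) fa \<Rightarrow> bool" where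
  "parw_eq sc \<Delta> S p q \<longleftrightarrow> fa_sub p q \<in> fa_ideal (lin_rels sc \<union> parw_rels \<Delta> S)"

definition E_el :: "('h \<Rightarrow> ('h \<times> 'h) list) \<Rightarrow> ('h \<Rightarrow> 'h) \<Rightarrow> 'h \<Rightarrow> ('k::one,'h) fa" where
  "E_el \<Delta> S h = fa_sum (\<lambda>(x,y). [(1, [x, S y])]) (\<Delta> h)"

definition Et_el :: "('h \<Rightarrow> ('h \<times> 'h) list) \<Rightarrow> ('h \<Rightarrow> 'h) \<Rightarrow> 'h \<Rightarrow> ('k::one,'h) fa" where
  "Et_el \<Delta> S h = fa_sum (\<lambda>(x,y). [(1, [S x, y])]) (\<Delta> h)"

end

theory Submission
  imports Defs "HOL-Library.Function_Algebras"
begin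

text \<open>Two elements of H_par^w coincide iff they agree under every linear functional on the free
  algebra that vanishes on the defining ideal. Such a functional is determined by its values W on
  words; W is multilinear in the letters and respects the defining relations, which turn each side
  of (a)-(d) into a Sweedler sum of a multilinear form on H. For (a) the two sides become
  k_1 (x) S(k_2) h and h_2 (S^-1(h_1) k)_1 (x) S((S^-1(h_1) k)_2); writing h = S g, their equality
  follows from the anti-comultiplicativity Delta(S g) = S(g_2) (x) S(g_1) of the antipode and the
  weak Hopf identity eps_s(g_1) (x) g_2 = 1_1 (x) g 1_2. Part (b) is the mirror image, and (c), (d)
  are reduced to (a), (b) by the same relations. Tensor identities in H (x) H are used throughout in
  the form that all vector-valued bilinear maps agree on both sides.\<close>

text \<open>Linearity without the vector-space axioms of domain and codomain, so that the closure
  rules collected in \<open>lin_map_intros\<close> carry no side conditions.\<close>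

definition lin_map ::
  "('k::field \<Rightarrow> 'a::ab_group_add \<Rightarrow> 'a) \<Rightarrow> ('k \<Rightarrow> 'b::ab_group_add \<Rightarrow> 'b) \<Rightarrow> ('a \<Rightarrow> 'b) \<Rightarrow> bool" where
  "lin_map s1 s2 f \<longleftrightarrow> (\<forall>x y. f (x + y) = f x + f y) \<and> (\<forall>c x. f (s1 c x) = s2 c (f x))"

definition bilinear_map ::
  "('k::field \<Rightarrow> 'h::ab_group_add \<Rightarrow> 'h) \<Rightarrow> ('k \<Rightarrow> 'v::ab_group_add \<Rightarrow> 'v) \<Rightarrow> ('h \<Rightarrow> 'h \<Rightarrow> 'v) \<Rightarrow> bool" where
  "bilinear_map sc s F \<longleftrightarrow> (\<forall>y. lin_map sc s (\<lambda>x. F x y)) \<and> (\<forall>x. lin_map sc s (\<lambda>y. F x y))"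

definition trilinear_map ::
  "('k::field \<Rightarrow> 'h::ab_group_add \<Rightarrow> 'h) \<Rightarrow> ('k \<Rightarrow> 'v::ab_group_add \<Rightarrow> 'v) \<Rightarrow> ('h \<Rightarrow> 'h \<Rightarrow> 'h \<Rightarrow> 'v) \<Rightarrow> bool" where
  "trilinear_map sc s F \<longleftrightarrow> (\<forall>y z. lin_map sc s (\<lambda>x. F x y z)) \<and> (\<forall>x z. lin_map sc s (\<lambda>y. F x y z))
                          \<and> (\<forall>x y. lin_map sc s (\<lambda>z. F x y z))"

named_theorems lin_map_intros

lemma bilinear_mapI [lin_map_intros]:
  "(\<And>y. lin_map sc s (\<lambda>x. F x y)) \<Longrightarrow> (\<And>x. lin_map sc s (\<lambda>y. F x y)) \<Longrightarrow> bilinear_map sc s F"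
  by (simp add: bilinear_map_def)

lemma trilinear_mapI [lin_map_intros]:
  "(\<And>y z. lin_map sc s (\<lambda>x. F x y z)) \<Longrightarrow> (\<And>x z. lin_map sc s (\<lambda>y. F x y z))
    \<Longrightarrow> (\<And>x y. lin_map sc s (\<lambda>z. F x y z)) \<Longrightarrow> trilinear_map sc s F"
  by (simp add: trilinear_map_def)

lemma bilinear_map_comp_left: "bilinear_map sc s F \<Longrightarrow> lin_map sc sc g \<Longrightarrow> lin_map sc s (\<lambda>x. F (g x) y)"
  unfolding bilinear_map_def lin_map_def by simp

lemma bilinear_map_comp_right: "bilinear_map sc s F \<Longrightarrow> lin_map sc sc g \<Longrightarrow> lin_map sc s (\<lambda>x. F y (g x))"
  unfolding bilinear_map_def lin_map_def by simp

lemma trilinear_map_comp1: "trilinear_map sc s F \<Longrightarrow> lin_map sc sc g \<Longrightarrow> lin_map sc s (\<lambda>x. F (g x) y z)"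
  unfolding trilinear_map_def lin_map_def by simp

lemma trilinear_map_comp2: "trilinear_map sc s F \<Longrightarrow> lin_map sc sc g \<Longrightarrow> lin_map sc s (\<lambda>x. F y (g x) z)"
  unfolding trilinear_map_def lin_map_def by simp

lemma trilinear_map_comp3: "trilinear_map sc s F \<Longrightarrow> lin_map sc sc g \<Longrightarrow> lin_map sc s (\<lambda>x. F y z (g x))"
  unfolding trilinear_map_def lin_map_def by simp

lemma lin_map_id [lin_map_intros]: "lin_map s s (\<lambda>x. x)"
  by (simp add: lin_map_def)

lemma lin_map_scale_coeff [lin_map_intros]: "vector_space s \<Longrightarrow> lin_map s1 (*) f \<Longrightarrow> lin_map s1 s (\<lambda>x. s (f x) v)"
  by (simp add: lin_map_def vector_space.vector_space_assms(2,3))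

lemma lin_map_scale [lin_map_intros]: "vector_space s \<Longrightarrow> lin_map s1 s f \<Longrightarrow> lin_map s1 s (\<lambda>x. s c (f x))"
  by (simp add: lin_map_def vector_space.vector_space_assms(1,3) mult.commute)

lemma linear_iff_lin_map:
  "Vector_Spaces.linear s1 s2 f \<longleftrightarrow> vector_space s1 \<and> vector_space s2 \<and> lin_map s1 s2 f"
  by (auto simp: linear_iff lin_map_def)

lemma lin_map_comp: "lin_map s1 s2 f \<Longrightarrow> lin_map s2 s3 g \<Longrightarrow> lin_map s1 s3 (\<lambda>x. g (f x))"
  unfolding lin_map_def by auto

lemma vector_space_field_mult [lin_map_intros]: "vector_space ((*) :: 'k::field \<Rightarrow> 'k \<Rightarrow> 'k)"
  by unfold_locales (auto simp: algebra_simps)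

lemma sum_list_map_concat: "sum_list (map f (concat xss)) = sum_list (map (\<lambda>xs. sum_list (map f xs)) xss)"
  by (induct xss) auto

lemma sum_list_map_swap:
  fixes f :: "'a \<Rightarrow> 'b \<Rightarrow> 'c::comm_monoid_add"
  shows "sum_list (map (\<lambda>x. sum_list (map (f x) ys)) xs) = sum_list (map (\<lambda>y. sum_list (map (\<lambda>x. f x y) xs)) ys)"
  by (induct xs) (simp_all add: sum_list_addf)

lemma additive_sum_list_map:
  fixes f :: "'a::ab_group_add \<Rightarrow> 'b::ab_group_add"
  assumes "\<And>x y. f (x + y) = f x + f y"
  shows "f (sum_list (map g xs)) = sum_list (map (\<lambda>x. f (g x)) xs)"
proof -
  have "f 0 = 0" using assms[of 0 0] by simp
  then show ?thesis by (induct xs) (auto simp: assms)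
qed

lemma lin_map_sum_list: "lin_map s1 s2 f \<Longrightarrow> f (sum_list (map g xs)) = sum_list (map (\<lambda>x. f (g x)) xs)"
  unfolding lin_map_def by (rule additive_sum_list_map) auto

lemma lin_map_zero: "lin_map s1 s2 f \<Longrightarrow> f 0 = 0"
  using lin_map_sum_list[of s1 s2 f _ "[]"] by simp

lemma lin_map_diff: "lin_map s1 s2 f \<Longrightarrow> f (x - y) = f x - f y"
  unfolding lin_map_def by (metis add_diff_cancel diff_add_cancel)

lemma exists_functional_separating_subspace:
  assumes vs: "vector_space s" and sub: "module.subspace s U" and x: "x \<notin> U"
  shows "\<exists>\<phi>. Vector_Spaces.linear s (*) \<phi> \<and> (\<forall>u\<in>U. \<phi> u = 0) \<and> \<phi> x = 1"
proof -
  interpret vector_space_pair s "(*)"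
    using vs vector_space_field_mult by (simp add: vector_space_pair_def)
  obtain B where B: "B \<subseteq> U" "vs1.independent B" "U \<subseteq> vs1.span B"
    using vs1.maximal_independent_subset by blast
  have "vs1.span B \<subseteq> U" using B(1) sub vs1.span_minimal by blast
  then have xB: "x \<notin> vs1.span B" using x by blast
  have ind: "vs1.independent (insert x B)" using vs1.independent_insertI[OF xB B(2)] .
  define g where "g = construct (insert x B) (\<lambda>b. if b = x then 1 else (0::'a))"
  have lg: "Vector_Spaces.linear s (*) g" unfolding g_def by (rule linear_construct[OF ind])
  have "\<forall>b\<in>B. g b = 0"
    unfolding g_def using construct_basis[OF ind] xB vs1.span_base by fastforce
  then have "\<forall>u\<in>U. g u = 0" using linear_eq_0_on_span[OF lg] B(3) by blast
  moreover have "g x = 1" unfolding g_def using construct_basis[OF ind] by simp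
  ultimately show ?thesis using lg by blast
qed

lemma functionals_separate_points:
  assumes vs: "vector_space s" and agree: "\<And>\<phi>. Vector_Spaces.linear s (*) \<phi> \<Longrightarrow> \<phi> a = \<phi> b"
  shows "a = b"
proof (rule ccontr)
  assume "a \<noteq> b"
  have "module.subspace s {0}"
    using vs by (simp add: module_iff_vector_space[symmetric] module.subspace_single_0)
  then obtain \<phi> where \<phi>: "Vector_Spaces.linear s (*) \<phi>" "\<phi> (a - b) = 1"
    using exists_functional_separating_subspace[OF vs, of "{0}" "a - b"] \<open>a \<noteq> b\<close> by auto
  then have "\<phi> (a - b) = 0" using agree[OF \<phi>(1)] lin_map_diff linear_iff_lin_map by fastforce
  with \<phi>(2) show False by simp
qed

lemma teq2_bilinear_map:
  assumes eq: "teq2 sc xs ys" and vs_sc: "vector_space sc" and vs: "vector_space s" and F: "bilinear_map sc s F"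
  shows "sum_list (map (\<lambda>(a,b). F a b) xs) = sum_list (map (\<lambda>(a,b). F a b) ys)"
proof (rule functionals_separate_points[OF vs])
  fix \<phi> assume "Vector_Spaces.linear s (*) \<phi>"
  then have l\<phi>: "lin_map s (*) \<phi>" by (simp add: linear_iff_lin_map)
  have "bil sc (\<lambda>a b. \<phi> (F a b))"
    unfolding bil_def linear_iff_lin_map using vs_sc vector_space_field_mult F
    by (simp add: bilinear_map_def lin_map_comp[OF _ l\<phi>])
  then show "\<phi> (sum_list (map (\<lambda>(a,b). F a b) xs)) = \<phi> (sum_list (map (\<lambda>(a,b). F a b) ys))"
    using eq by (simp add: teq2_def lin_map_sum_list[OF l\<phi>] prod.case_distrib)
qed

lemma teq3_trilinear_map:
  assumes eq: "teq3 sc xs ys" and vs_sc: "vector_space sc" and vs: "vector_space s" and F: "trilinear_map sc s F"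
  shows "sum_list (map (\<lambda>(a,b,c). F a b c) xs) = sum_list (map (\<lambda>(a,b,c). F a b c) ys)"
proof (rule functionals_separate_points[OF vs])
  fix \<phi> assume "Vector_Spaces.linear s (*) \<phi>"
  then have l\<phi>: "lin_map s (*) \<phi>" by (simp add: linear_iff_lin_map)
  have "tril sc (\<lambda>a b c. \<phi> (F a b c))"
    unfolding tril_def linear_iff_lin_map using vs_sc vector_space_field_mult F
    by (simp add: trilinear_map_def lin_map_comp[OF _ l\<phi>])
  then show "\<phi> (sum_list (map (\<lambda>(a,b,c). F a b c) xs)) = \<phi> (sum_list (map (\<lambda>(a,b,c). F a b c) ys))"
    using eq by (simp add: teq3_def lin_map_sum_list[OF l\<phi>] prod.case_distrib)
qed

locale comultiplication =
  fixes \<Delta> :: "'h::ring_1 \<Rightarrow> ('h \<times> 'h) list"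
begin

definition sweedler :: "'h \<Rightarrow> ('h \<Rightarrow> 'h \<Rightarrow> 'v::ab_group_add) \<Rightarrow> 'v" where
  "sweedler h F = sum_list (map (\<lambda>(a,b). F a b) (\<Delta> h))"

lemma sweedler_cong: "(\<And>a b. F a b = G a b) \<Longrightarrow> sweedler h F = sweedler h G"
  by (simp add: sweedler_def)

lemma sweedler_add_fun: "sweedler h (\<lambda>a b. F a b + G a b) = sweedler h F + sweedler h G"
  unfolding sweedler_def by (simp add: split_def sum_list_addf)

lemma sweedler_eq_if_diff_zero:
  "sweedler h (\<lambda>a b. F a b - G a b) = (0::'a::ab_group_add) \<Longrightarrow> sweedler h F = sweedler h G"
  unfolding sweedler_def by (simp add: split_def sum_list_subtractf)

lemma additive_sweedler:
  fixes G :: "'a::ab_group_add \<Rightarrow> 'b::ab_group_add"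
  assumes "\<And>x y. G (x + y) = G x + G y"
  shows "G (sweedler h M) = sweedler h (\<lambda>a b. G (M a b))"
  unfolding sweedler_def by (simp add: additive_sum_list_map[OF assms] prod.case_distrib)

lemma lin_map_sweedler: "lin_map s1 s2 G \<Longrightarrow> G (sweedler h M) = sweedler h (\<lambda>a b. G (M a b))"
  by (rule additive_sweedler) (simp add: lin_map_def)

lemma sweedler_scale_fun: "vector_space s \<Longrightarrow> sweedler h (\<lambda>a b. s c (F a b)) = s c (sweedler h F)"
  by (rule additive_sweedler[symmetric]) (simp add: vector_space.vector_space_assms(1))

lemma sweedler_scale_fun_left: "vector_space s \<Longrightarrow> sweedler h (\<lambda>a b. s (f a b) v) = s (sweedler h f) v"
  by (rule additive_sweedler[symmetric]) (simp add: vector_space.vector_space_assms(2))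

lemma sweedler_mult_left: "sweedler h (\<lambda>a b. c * F a b) = c * (sweedler h F :: 'a::ring)"
  by (rule additive_sweedler[symmetric]) (simp add: algebra_simps)

lemma sweedler_mult_right: "sweedler h (\<lambda>a b. F a b * c) = (sweedler h F :: 'a::ring) * c"
  by (rule additive_sweedler[symmetric]) (simp add: algebra_simps)

lemma lin_map_sweedler_fun [lin_map_intros]:
  assumes vs: "vector_space s" and M: "\<And>a b. lin_map s1 s (\<lambda>x. M x a b)"
  shows "lin_map s1 s (\<lambda>x. sweedler h (M x))"
  unfolding lin_map_def
proof safe
  fix x y
  have "sweedler h (M (x + y)) = sweedler h (\<lambda>a b. M x a b + M y a b)"
    by (rule sweedler_cong) (use M in \<open>simp add: lin_map_def\<close>)
  then show "sweedler h (M (x + y)) = sweedler h (M x) + sweedler h (M y)" by (simp add: sweedler_add_fun)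
next
  fix c x
  have "sweedler h (M (s1 c x)) = sweedler h (\<lambda>a b. s c (M x a b))"
    by (rule sweedler_cong) (use M in \<open>simp add: lin_map_def\<close>)
  then show "sweedler h (M (s1 c x)) = s c (sweedler h (M x))" by (simp add: sweedler_scale_fun[OF vs])
qed

lemma sweedler_swap:
  "sweedler h (\<lambda>a b. sweedler g (\<lambda>c d. M a b c d)) = sweedler g (\<lambda>c d. sweedler h (\<lambda>a b. M a b c d))"
  unfolding sweedler_def using sum_list_map_swap[of "\<lambda>(a,b) (c,d). M a b c d" "\<Delta> g" "\<Delta> h"]
  by (simp add: split_def)

end

locale weak_hopf_algebra =
  fixes sc :: "'k::field \<Rightarrow> 'h::ring_1 \<Rightarrow> 'h" and \<Delta> :: "'h \<Rightarrow> ('h \<times> 'h) list"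
    and \<epsilon> :: "'h \<Rightarrow> 'k" and S :: "'h \<Rightarrow> 'h"
  assumes weak_hopf: "weak_hopf sc \<Delta> \<epsilon> S"

sublocale weak_hopf_algebra \<subseteq> comultiplication \<Delta> .

context weak_hopf_algebra
begin

lemma vector_space_sc [lin_map_intros]: "vector_space sc"
  using weak_hopf unfolding weak_hopf_def by blast

lemma scale_mult_left: "sc c (a * b) = sc c a * b"
  using weak_hopf unfolding weak_hopf_def by blast

lemma scale_mult_right: "sc c (a * b) = a * sc c b"
  using weak_hopf unfolding weak_hopf_def by blast

lemma scale_mult_scale: "sc a x * sc b y = sc (a * b) (x * y)"
  using vector_space.vector_space_assms(3)[OF vector_space_sc]
  by (simp add: scale_mult_left[symmetric] scale_mult_right[symmetric] mult.commute)

lemma lin_map_counit: "lin_map sc (*) \<epsilon>"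
  using weak_hopf unfolding weak_hopf_def linear_iff_lin_map by blast

lemma counit_scale: "\<epsilon> (sc c x) = c * \<epsilon> x"
  using lin_map_counit by (simp add: lin_map_def)

lemma lin_map_antipode: "lin_map sc sc S"
  using weak_hopf unfolding weak_hopf_def linear_iff_lin_map by blast

lemma lin_map_antipode_comp [lin_map_intros]: "lin_map sc sc g \<Longrightarrow> lin_map sc sc (\<lambda>x. S (g x))"
  using lin_map_antipode by (simp add: lin_map_def)

lemma lin_map_counit_comp [lin_map_intros]: "lin_map sc sc g \<Longrightarrow> lin_map sc (*) (\<lambda>x. \<epsilon> (g x))"
  using lin_map_counit by (simp add: lin_map_def)

lemma lin_map_mult_const_right [lin_map_intros]: "lin_map sc sc g \<Longrightarrow> lin_map sc sc (\<lambda>x. g x * a)"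
  by (simp add: lin_map_def algebra_simps scale_mult_left)

lemma lin_map_mult_const_left [lin_map_intros]: "lin_map sc sc g \<Longrightarrow> lin_map sc sc (\<lambda>x. a * g x)"
  by (simp add: lin_map_def algebra_simps scale_mult_right)

lemma sweedler_add:
  assumes "vector_space s" and "bilinear_map sc s F"
  shows "sweedler (a + b) F = sweedler a F + sweedler b F"
proof -
  have "teq2 sc (\<Delta> (a + b)) (\<Delta> a @ \<Delta> b)" using weak_hopf unfolding weak_hopf_def by blast
  from teq2_bilinear_map[OF this vector_space_sc assms] show ?thesis by (simp add: sweedler_def)
qed

lemma sweedler_scale:
  assumes vs: "vector_space s" and F: "bilinear_map sc s F"
  shows "sweedler (sc c a) F = s c (sweedler a F)"
proof -
  have "teq2 sc (\<Delta> (sc c a)) (map (\<lambda>(x,y). (sc c x, y)) (\<Delta> a))"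
    using weak_hopf unfolding weak_hopf_def by blast
  from teq2_bilinear_map[OF this vector_space_sc vs F]
  have "sweedler (sc c a) F = sweedler a (\<lambda>x y. F (sc c x) y)"
    by (simp add: sweedler_def split_def comp_def)
  also have "\<dots> = sweedler a (\<lambda>x y. s c (F x y))"
    using F by (simp add: bilinear_map_def lin_map_def)
  finally show ?thesis by (simp add: sweedler_scale_fun[OF vs])
qed

lemma lin_map_sweedler_arg: "vector_space s \<Longrightarrow> bilinear_map sc s F \<Longrightarrow> lin_map sc s (\<lambda>h. sweedler h F)"
  unfolding lin_map_def using sweedler_add sweedler_scale by blast

lemma lin_map_sweedler_arg_comp [lin_map_intros]:
  "vector_space s \<Longrightarrow> bilinear_map sc s M \<Longrightarrow> lin_map sc sc g \<Longrightarrow> lin_map sc s (\<lambda>x. sweedler (g x) M)"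
  using lin_map_sweedler_arg[of s M] by (simp add: lin_map_def)

lemma sweedler_mult:
  assumes "vector_space s" and "bilinear_map sc s F"
  shows "sweedler (k * h) F = sweedler k (\<lambda>a b. sweedler h (\<lambda>c d. F (a * c) (b * d)))"
proof -
  have "teq2 sc (\<Delta> (k * h)) (tmul2 (\<Delta> k) (\<Delta> h))" using weak_hopf unfolding weak_hopf_def by blast
  from teq2_bilinear_map[OF this vector_space_sc assms] show ?thesis
    by (simp add: sweedler_def tmul2_def sum_list_map_concat split_def comp_def)
qed

lemma sweedler_coassoc:
  assumes "vector_space s" and "trilinear_map sc s T"
  shows "sweedler h (\<lambda>x y. sweedler x (\<lambda>u v. T u v y)) = sweedler h (\<lambda>x y. sweedler y (\<lambda>u v. T x u v))"
proof -
  have "teq3 sc (cop2L \<Delta> h) (cop2R \<Delta> h)" using weak_hopf unfolding weak_hopf_def by blast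
  from teq3_trilinear_map[OF this vector_space_sc assms] show ?thesis
    by (simp add: sweedler_def cop2L_def cop2R_def sum_list_map_concat split_def comp_def)
qed

lemma weak_comult_unit_left:
  assumes "vector_space s" and "trilinear_map sc s T"
  shows "sweedler 1 (\<lambda>x y. sweedler 1 (\<lambda>x' y'. T x' (x * y') y)) = sweedler 1 (\<lambda>x y. sweedler x (\<lambda>u v. T u v y))"
proof -
  have "teq3 sc (tmul3 (map (\<lambda>(x,y). (1,x,y)) (\<Delta> 1)) (map (\<lambda>(x,y). (x,y,1)) (\<Delta> 1))) (cop2L \<Delta> 1)"
    using weak_hopf unfolding weak_hopf_def by blast
  from teq3_trilinear_map[OF this vector_space_sc assms] show ?thesis
    by (simp add: sweedler_def cop2L_def tmul3_def sum_list_map_concat split_def comp_def)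
qed

lemma weak_comult_unit_right:
  assumes "vector_space s" and "trilinear_map sc s T"
  shows "sweedler 1 (\<lambda>x y. sweedler x (\<lambda>u v. T u v y)) = sweedler 1 (\<lambda>x y. sweedler 1 (\<lambda>x' y'. T x (y * x') y'))"
proof -
  have "teq3 sc (cop2L \<Delta> 1) (tmul3 (map (\<lambda>(x,y). (x,y,1)) (\<Delta> 1)) (map (\<lambda>(x,y). (1,x,y)) (\<Delta> 1)))"
    using weak_hopf unfolding weak_hopf_def by blast
  from teq3_trilinear_map[OF this vector_space_sc assms] show ?thesis
    by (simp add: sweedler_def cop2L_def tmul3_def sum_list_map_concat split_def comp_def)
qed

lemma sweedler_counit_left:
  assumes G: "lin_map sc s G" and vs: "vector_space s"
  shows "sweedler h (\<lambda>x y. s (\<epsilon> x) (G y)) = G h"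
proof -
  have "sum_list (map (\<lambda>(x,y). sc (\<epsilon> x) y) (\<Delta> h)) = h"
    using weak_hopf unfolding weak_hopf_def by blast
  then have "h = sweedler h (\<lambda>x y. sc (\<epsilon> x) y)" by (simp add: sweedler_def)
  then have "G h = sweedler h (\<lambda>x y. G (sc (\<epsilon> x) y))" by (metis lin_map_sweedler[OF G])
  also have "\<dots> = sweedler h (\<lambda>x y. s (\<epsilon> x) (G y))" using G by (simp add: lin_map_def)
  finally show ?thesis by (rule sym)
qed

lemma sweedler_counit_right:
  assumes G: "lin_map sc s G" and vs: "vector_space s"
  shows "sweedler h (\<lambda>x y. s (\<epsilon> y) (G x)) = G h"
proof -
  have "sum_list (map (\<lambda>(x,y). sc (\<epsilon> y) x) (\<Delta> h)) = h"
    using weak_hopf unfolding weak_hopf_def by blast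
  then have "h = sweedler h (\<lambda>x y. sc (\<epsilon> y) x)" by (simp add: sweedler_def)
  then have "G h = sweedler h (\<lambda>x y. G (sc (\<epsilon> y) x))" by (metis lin_map_sweedler[OF G])
  also have "\<dots> = sweedler h (\<lambda>x y. s (\<epsilon> y) (G x))" using G by (simp add: lin_map_def)
  finally show ?thesis by (rule sym)
qed

lemma counit_weak_mult_left: "sweedler h (\<lambda>x y. \<epsilon> (k * x) * \<epsilon> (y * g)) = \<epsilon> (k * h * g)"
  using weak_hopf unfolding weak_hopf_def sweedler_def by blast

lemma counit_weak_mult_right: "sweedler h (\<lambda>x y. \<epsilon> (k * y) * \<epsilon> (x * g)) = \<epsilon> (k * h * g)"
  using weak_hopf unfolding weak_hopf_def sweedler_def by metis

lemma antipode_eq_sweedler: "S h = sweedler h (\<lambda>x y. sweedler x (\<lambda>a b. S a * b * S y))"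
proof -
  have "S h = sum_list (map (\<lambda>(a,b,c). S a * b * S c) (cop2L \<Delta> h))"
    using weak_hopf unfolding weak_hopf_def by blast
  then show ?thesis by (simp add: sweedler_def cop2L_def sum_list_map_concat split_def comp_def)
qed

definition eps_t :: "'h \<Rightarrow> 'h" where
  "eps_t h = sweedler h (\<lambda>x y. x * S y)"

definition eps_s :: "'h \<Rightarrow> 'h" where
  "eps_s h = sweedler h (\<lambda>x y. S x * y)"

lemma eps_t_eq: "eps_t h = sweedler 1 (\<lambda>x y. sc (\<epsilon> (x * h)) y)"
  using weak_hopf unfolding weak_hopf_def eps_t_def sweedler_def by blast

lemma eps_s_eq: "eps_s h = sweedler 1 (\<lambda>x y. sc (\<epsilon> (h * y)) x)"
  using weak_hopf unfolding weak_hopf_def eps_s_def sweedler_def by blast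

lemma lin_map_eps_t: "lin_map sc s G \<Longrightarrow> G (eps_t x) = sweedler x (\<lambda>a b. G (a * S b))"
  unfolding eps_t_def by (rule lin_map_sweedler)

lemma lin_map_eps_s: "lin_map sc s G \<Longrightarrow> G (eps_s x) = sweedler x (\<lambda>a b. G (S a * b))"
  unfolding eps_s_def by (rule lin_map_sweedler)

lemma bilinear_map_mult_antipode: "bilinear_map sc sc (\<lambda>x y. x * S y)"
  by (rule lin_map_intros)+

lemma bilinear_map_antipode_mult: "bilinear_map sc sc (\<lambda>x y. S x * y)"
  by (rule lin_map_intros)+

lemma lin_map_eps_t_comp [lin_map_intros]: "lin_map sc sc g \<Longrightarrow> lin_map sc sc (\<lambda>x. eps_t (g x))"
  unfolding eps_t_def by (rule lin_map_sweedler_arg_comp[OF vector_space_sc bilinear_map_mult_antipode])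

lemma lin_map_eps_s_comp [lin_map_intros]: "lin_map sc sc g \<Longrightarrow> lin_map sc sc (\<lambda>x. eps_s (g x))"
  unfolding eps_s_def by (rule lin_map_sweedler_arg_comp[OF vector_space_sc bilinear_map_antipode_mult])

lemma bilinear_map_sweedler_left: "bilinear_map sc s F \<Longrightarrow> F (sweedler h M) b = sweedler h (\<lambda>x y. F (M x y) b)"
  by (rule lin_map_sweedler) (auto simp: bilinear_map_def)

lemma bilinear_map_sweedler_right: "bilinear_map sc s F \<Longrightarrow> F a (sweedler h M) = sweedler h (\<lambda>x y. F a (M x y))"
  by (rule lin_map_sweedler) (auto simp: bilinear_map_def)

lemma bilinear_map_eps_t_left:
  assumes F: "bilinear_map sc s F"
  shows "F (eps_t u) b = sweedler 1 (\<lambda>x y. s (\<epsilon> (x * u)) (F y b))"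
proof -
  have "F (eps_t u) b = sweedler 1 (\<lambda>x y. F (sc (\<epsilon> (x * u)) y) b)"
    unfolding eps_t_eq by (rule bilinear_map_sweedler_left[OF F])
  then show ?thesis using F by (simp add: bilinear_map_def lin_map_def)
qed

lemma bilinear_map_eps_t_right:
  assumes F: "bilinear_map sc s F"
  shows "F a (eps_t u) = sweedler 1 (\<lambda>x y. s (\<epsilon> (x * u)) (F a y))"
proof -
  have "F a (eps_t u) = sweedler 1 (\<lambda>x y. F a (sc (\<epsilon> (x * u)) y))"
    unfolding eps_t_eq by (rule bilinear_map_sweedler_right[OF F])
  then show ?thesis using F by (simp add: bilinear_map_def lin_map_def)
qed

lemma bilinear_map_eps_s_left:
  assumes F: "bilinear_map sc s F"
  shows "F (eps_s v) b = sweedler 1 (\<lambda>x y. s (\<epsilon> (v * y)) (F x b))"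
proof -
  have "F (eps_s v) b = sweedler 1 (\<lambda>x y. F (sc (\<epsilon> (v * y)) x) b)"
    unfolding eps_s_eq by (rule bilinear_map_sweedler_left[OF F])
  then show ?thesis using F by (simp add: bilinear_map_def lin_map_def)
qed

lemma bilinear_map_eps_s_right:
  assumes F: "bilinear_map sc s F"
  shows "F a (eps_s v) = sweedler 1 (\<lambda>x y. s (\<epsilon> (v * y)) (F a x))"
proof -
  have "F a (eps_s v) = sweedler 1 (\<lambda>x y. F a (sc (\<epsilon> (v * y)) x))"
    unfolding eps_s_eq by (rule bilinear_map_sweedler_right[OF F])
  then show ?thesis using F by (simp add: bilinear_map_def lin_map_def)
qed

lemma sweedler_one_mult:
  assumes "vector_space s" and "bilinear_map sc s F"
  shows "sweedler 1 (\<lambda>a b. sweedler h (\<lambda>c d. F (a * c) (b * d))) = sweedler h F"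
  using sweedler_mult[OF assms, of 1 h] by simp

lemma sweedler_mult_one:
  assumes "vector_space s" and "bilinear_map sc s F"
  shows "sweedler h (\<lambda>a b. sweedler 1 (\<lambda>c d. F (a * c) (b * d))) = sweedler h F"
  using sweedler_mult[OF assms, of h 1] by simp

lemma counit_mult_eps_t: "\<epsilon> (a * eps_t g) = \<epsilon> (a * g)"
proof -
  have "\<epsilon> (a * eps_t g) = sweedler 1 (\<lambda>x y. \<epsilon> (a * sc (\<epsilon> (x * g)) y))" unfolding eps_t_eq
    by (rule lin_map_sweedler[OF lin_map_counit_comp[OF lin_map_mult_const_left[OF lin_map_id]]])
  also have "\<dots> = sweedler 1 (\<lambda>x y. \<epsilon> (a * y) * \<epsilon> (x * g))"
    by (rule sweedler_cong) (simp add: scale_mult_right[symmetric] counit_scale)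
  also have "\<dots> = \<epsilon> (a * g)" using counit_weak_mult_right[of 1 a g] by (simp add: mult.commute)
  finally show ?thesis .
qed

lemma counit_eps_s_mult: "\<epsilon> (eps_s h * a) = \<epsilon> (h * a)"
proof -
  have "\<epsilon> (eps_s h * a) = sweedler 1 (\<lambda>x y. \<epsilon> (sc (\<epsilon> (h * y)) x * a))" unfolding eps_s_eq
    by (rule lin_map_sweedler[OF lin_map_counit_comp[OF lin_map_mult_const_right[OF lin_map_id]]])
  also have "\<dots> = sweedler 1 (\<lambda>x y. \<epsilon> (h * y) * \<epsilon> (x * a))"
    by (rule sweedler_cong) (simp add: scale_mult_left[symmetric] counit_scale)
  also have "\<dots> = \<epsilon> (h * a)" using counit_weak_mult_right[of 1 h a] by (simp add: mult.commute)
  finally show ?thesis .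
qed

lemma eps_t_one: "eps_t 1 = 1"
  unfolding eps_t_eq using sweedler_counit_left[OF lin_map_id vector_space_sc, of 1] by simp

lemma eps_s_one: "eps_s 1 = 1"
  unfolding eps_s_eq using sweedler_counit_right[OF lin_map_id vector_space_sc, of 1] by simp

lemma eps_t_cong: "(\<And>x. \<epsilon> (x * a) = \<epsilon> (x * b)) \<Longrightarrow> eps_t a = eps_t b"
  unfolding eps_t_eq by (rule sweedler_cong) simp

lemma eps_s_cong: "(\<And>x. \<epsilon> (a * x) = \<epsilon> (b * x)) \<Longrightarrow> eps_s a = eps_s b"
  unfolding eps_s_eq by (rule sweedler_cong) simp

lemma sweedler_eps_t_right:
  assumes vs: "vector_space s" and F: "bilinear_map sc s F"
  shows "sweedler g (\<lambda>a b. F a (eps_t b)) = sweedler 1 (\<lambda>x y. F (x * g) y)"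
proof -
  note LF = bilinear_map_comp_left[OF F] bilinear_map_comp_right[OF F]
  have "sweedler g (\<lambda>a b. F a (eps_t b)) = sweedler g (\<lambda>a b. sweedler 1 (\<lambda>x y. s (\<epsilon> (x * b)) (F a y)))"
    by (rule sweedler_cong) (rule bilinear_map_eps_t_right[OF F])
  also have "\<dots> = sweedler 1 (\<lambda>x y. sweedler g (\<lambda>a b. s (\<epsilon> (x * b)) (F a y)))"
    by (rule sweedler_swap)
  also have "\<dots> =
        sweedler 1 (\<lambda>x y. sweedler 1 (\<lambda>x' y'. sweedler g (\<lambda>c d. s (\<epsilon> (x * (y' * d))) (F (x' * c) y))))"
    by (rule sweedler_cong)
      (rule sweedler_one_mult[OF vs, symmetric], (assumption | rule lin_map_intros LF vs)+)
  also have "\<dots> =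
        sweedler 1 (\<lambda>x y. sweedler x (\<lambda>u v. sweedler g (\<lambda>c d. s (\<epsilon> (v * d)) (F (u * c) y))))"
  proof -
    have "trilinear_map sc s (\<lambda>u v y. sweedler g (\<lambda>c d. s (\<epsilon> (v * d)) (F (u * c) y)))"
      by (assumption | rule lin_map_intros LF vs)+
    from weak_comult_unit_left[OF vs this] show ?thesis by (simp add: mult.assoc)
  qed
  also have "\<dots> = sweedler 1 (\<lambda>x y. sweedler (x * g) (\<lambda>u v. s (\<epsilon> v) (F u y)))"
    by (rule sweedler_cong)
      (rule sweedler_mult[OF vs, symmetric], (assumption | rule lin_map_intros LF vs)+)
  also have "\<dots> = sweedler 1 (\<lambda>x y. F (x * g) y)"
    by (rule sweedler_cong)
      (rule sweedler_counit_right[OF _ vs], (assumption | rule lin_map_intros LF vs)+)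
  finally show ?thesis .
qed

lemma sweedler_eps_s_left:
  assumes vs: "vector_space s" and F: "bilinear_map sc s F"
  shows "sweedler g (\<lambda>a b. F (eps_s a) b) = sweedler 1 (\<lambda>x y. F x (g * y))"
proof -
  note LF = bilinear_map_comp_left[OF F] bilinear_map_comp_right[OF F]
  have "sweedler g (\<lambda>a b. F (eps_s a) b) = sweedler g (\<lambda>a b. sweedler 1 (\<lambda>x y. s (\<epsilon> (a * y)) (F x b)))"
    by (rule sweedler_cong) (rule bilinear_map_eps_s_left[OF F])
  also have "\<dots> =
        sweedler 1 (\<lambda>x' y'. sweedler g (\<lambda>a b. s (\<epsilon> (a * y')) (F x' b)))"
    by (rule sweedler_swap)
  also have "\<dots> =
        sweedler 1 (\<lambda>x' y'. sweedler g (\<lambda>a b. sweedler 1 (\<lambda>x y. s (\<epsilon> (a * x * y')) (F x' (b * y)))))"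
    by (rule sweedler_cong)
      (rule sweedler_mult_one[OF vs, symmetric], (assumption | rule lin_map_intros LF vs)+)
  also have "\<dots> =
        sweedler 1 (\<lambda>x y. sweedler 1 (\<lambda>x' y'. sweedler g (\<lambda>a b. s (\<epsilon> (a * (x * y'))) (F x' (b * y)))))"
    by (subst sweedler_swap, subst (2) sweedler_swap) (simp add: mult.assoc)
  also have "\<dots> =
        sweedler 1 (\<lambda>x y. sweedler x (\<lambda>u v. sweedler g (\<lambda>a b. s (\<epsilon> (a * v)) (F u (b * y)))))"
  proof -
    have "trilinear_map sc s (\<lambda>u v y. sweedler g (\<lambda>a b. s (\<epsilon> (a * v)) (F u (b * y))))"
      by (assumption | rule lin_map_intros LF vs)+
    from weak_comult_unit_left[OF vs this] show ?thesis by simp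
  qed
  also have "\<dots> =
        sweedler 1 (\<lambda>x y. sweedler y (\<lambda>c d. sweedler g (\<lambda>a b. s (\<epsilon> (a * c)) (F x (b * d)))))"
    by (rule sweedler_coassoc[OF vs]) (assumption | rule lin_map_intros LF vs)+
  also have "\<dots> =
        sweedler 1 (\<lambda>x y. sweedler g (\<lambda>a b. sweedler y (\<lambda>c d. s (\<epsilon> (a * c)) (F x (b * d)))))"
    by (rule sweedler_cong) (rule sweedler_swap)
  also have "\<dots> = sweedler 1 (\<lambda>x y. sweedler (g * y) (\<lambda>u v. s (\<epsilon> u) (F x v)))"
    by (rule sweedler_cong)
      (rule sweedler_mult[OF vs, symmetric], (assumption | rule lin_map_intros LF vs)+)
  also have "\<dots> = sweedler 1 (\<lambda>x y. F x (g * y))"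
    by (rule sweedler_cong)
      (rule sweedler_counit_left[OF _ vs], (assumption | rule lin_map_intros LF vs)+)
  finally show ?thesis .
qed

lemma sweedler_eps_t:
  assumes vs: "vector_space s" and F: "bilinear_map sc s F"
  shows "sweedler (eps_t g) F = sweedler 1 (\<lambda>x y. F (x * eps_t g) y)"
proof -
  note LF = bilinear_map_comp_left[OF F] bilinear_map_comp_right[OF F]
  have "sweedler (eps_t g) F = sweedler 1 (\<lambda>x y. sweedler (sc (\<epsilon> (x * g)) y) F)"
    unfolding eps_t_eq by (rule lin_map_sweedler[OF lin_map_sweedler_arg[OF vs F]])
  also have "\<dots> = sweedler 1 (\<lambda>x y. sweedler y (\<lambda>c d. s (\<epsilon> (x * g)) (F c d)))"
    by (rule sweedler_cong) (simp add: sweedler_scale[OF vs F] sweedler_scale_fun[OF vs])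
  also have "\<dots> = sweedler 1 (\<lambda>x y. sweedler x (\<lambda>u v. s (\<epsilon> (u * g)) (F v y)))"
    by (rule sweedler_coassoc[OF vs, symmetric]) (assumption | rule lin_map_intros LF vs)+
  also have "\<dots> =
        sweedler 1 (\<lambda>x y. sweedler 1 (\<lambda>x' y'. s (\<epsilon> (x' * g)) (F (x * y') y)))"
  proof -
    have "trilinear_map sc s (\<lambda>u v y. s (\<epsilon> (u * g)) (F v y))"
      by (assumption | rule lin_map_intros LF vs)+
    from weak_comult_unit_left[OF vs this] show ?thesis by simp
  qed
  also have "\<dots> = sweedler 1 (\<lambda>x y. F (x * eps_t g) y)"
    by (rule sweedler_cong)
      (rule bilinear_map_eps_t_right[where F="\<lambda>a b. F (a * b) y" for y, symmetric],
        (assumption | rule lin_map_intros LF vs)+)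
  finally show ?thesis .
qed

lemma sweedler_eps_s:
  assumes vs: "vector_space s" and F: "bilinear_map sc s F"
  shows "sweedler (eps_s h) F = sweedler 1 (\<lambda>x y. F x (eps_s h * y))"
proof -
  note LF = bilinear_map_comp_left[OF F] bilinear_map_comp_right[OF F]
  have "sweedler (eps_s h) F = sweedler 1 (\<lambda>x y. sweedler (sc (\<epsilon> (h * y)) x) F)"
    unfolding eps_s_eq by (rule lin_map_sweedler[OF lin_map_sweedler_arg[OF vs F]])
  also have "\<dots> = sweedler 1 (\<lambda>x y. sweedler x (\<lambda>u v. s (\<epsilon> (h * y)) (F u v)))"
    by (rule sweedler_cong) (simp add: sweedler_scale[OF vs F] sweedler_scale_fun[OF vs])
  also have "\<dots> =
        sweedler 1 (\<lambda>x y. sweedler 1 (\<lambda>x' y'. s (\<epsilon> (h * y)) (F x' (x * y'))))"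
  proof -
    have "trilinear_map sc s (\<lambda>u v y. s (\<epsilon> (h * y)) (F u v))"
      by (assumption | rule lin_map_intros LF vs)+
    from weak_comult_unit_left[OF vs this] show ?thesis by simp
  qed
  also have "\<dots> =
        sweedler 1 (\<lambda>x' y'. sweedler 1 (\<lambda>x y. s (\<epsilon> (h * y)) (F x' (x * y'))))"
    by (rule sweedler_swap)
  also have "\<dots> = sweedler 1 (\<lambda>x y. F x (eps_s h * y))"
    by (rule sweedler_cong)
      (rule bilinear_map_eps_s_left[where F="\<lambda>a b. F x (a * b)" for x, symmetric],
        (assumption | rule lin_map_intros LF vs)+)
  finally show ?thesis .
qed

lemma eps_t_mult: "eps_t (h * g) = sweedler h (\<lambda>a b. a * eps_t g * S b)"
proof -
  have "eps_t (h * g) = eps_t (h * eps_t g)"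
    by (rule eps_t_cong) (simp add: mult.assoc[symmetric] counit_mult_eps_t)
  also have "\<dots> = sweedler h (\<lambda>a b. sweedler (eps_t g) (\<lambda>c d. a * c * S (b * d)))"
    unfolding eps_t_def by (rule sweedler_mult[OF vector_space_sc bilinear_map_mult_antipode])
  also have "\<dots> = sweedler h (\<lambda>a b. sweedler 1 (\<lambda>x y. a * (x * eps_t g) * S (b * y)))"
    by (rule sweedler_cong) (rule sweedler_eps_t[OF vector_space_sc], (rule lin_map_intros)+)
  also have "\<dots> = sweedler h (\<lambda>a b. a * eps_t g * S b)"
    using sweedler_mult_one[OF vector_space_sc, of "\<lambda>x y. x * eps_t g * S y" h]
    by (simp add: mult.assoc bilinear_map_mult_antipode lin_map_intros)
  finally show ?thesis .
qed

lemma eps_s_mult: "eps_s (h * g) = sweedler g (\<lambda>c d. S c * eps_s h * d)"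
proof -
  have "eps_s (h * g) = eps_s (eps_s h * g)"
    by (rule eps_s_cong) (simp add: mult.assoc counit_eps_s_mult)
  also have "\<dots> = sweedler (eps_s h) (\<lambda>a b. sweedler g (\<lambda>c d. S (a * c) * (b * d)))"
    unfolding eps_s_def by (rule sweedler_mult[OF vector_space_sc bilinear_map_antipode_mult])
  also have "\<dots> = sweedler 1 (\<lambda>x y. sweedler g (\<lambda>c d. S (x * c) * (eps_s h * y * d)))"
    by (rule sweedler_eps_s[OF vector_space_sc]) (rule lin_map_intros)+
  also have "\<dots> = sweedler g (\<lambda>c d. S c * eps_s h * d)"
    using sweedler_one_mult[OF vector_space_sc, of "\<lambda>x y. S x * (eps_s h * y)" g]
    by (simp add: mult.assoc lin_map_intros)
  finally show ?thesis .
qed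

lemma eps_s_eps_t_commute: "eps_s q * eps_t p = eps_t p * eps_s q"
proof -
  define T where "T = (\<lambda>a b c. sc (\<epsilon> (a * p) * \<epsilon> (q * c)) b)"
  have T: "trilinear_map sc sc T" unfolding T_def by (rule lin_map_intros)+
  have "eps_s q * eps_t p = sweedler 1 (\<lambda>x y. sweedler 1 (\<lambda>x' y'. sc (\<epsilon> (q * y)) x * sc (\<epsilon> (x' * p)) y'))"
    unfolding eps_s_eq eps_t_eq by (simp add: sweedler_mult_left sweedler_mult_right)
  also have "\<dots> = sweedler 1 (\<lambda>x y. sweedler 1 (\<lambda>x' y'. T x' (x * y') y))"
    unfolding T_def by (simp add: scale_mult_scale mult.commute)
  also have "\<dots> = sweedler 1 (\<lambda>x y. sweedler 1 (\<lambda>x' y'. T x (y * x') y'))"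
    using weak_comult_unit_left[OF vector_space_sc T] weak_comult_unit_right[OF vector_space_sc T] by simp
  also have "\<dots> =
        sweedler 1 (\<lambda>x y. sweedler 1 (\<lambda>x' y'. sc (\<epsilon> (x * p)) y * sc (\<epsilon> (q * y')) x'))"
    unfolding T_def by (simp add: scale_mult_scale)
  also have "\<dots> = eps_t p * eps_s q"
    unfolding eps_s_eq eps_t_eq by (simp add: sweedler_mult_left sweedler_mult_right)
  finally show ?thesis .
qed

lemma lin_map_apply_antipode:
  "lin_map sc s G \<Longrightarrow> G (S h) = sweedler h (\<lambda>x y. sweedler x (\<lambda>a b. G (S a * b * S y)))"
  by (subst antipode_eq_sweedler) (simp add: lin_map_sweedler)

lemma antipode_eq_eps_s_mult: "S h = sweedler h (\<lambda>x y. eps_s x * S y)"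
  by (subst antipode_eq_sweedler) (simp add: eps_s_def sweedler_mult_right)

lemma antipode_eq_mult_eps_t: "S h = sweedler h (\<lambda>x y. S x * eps_t y)"
proof -
  have "S h = sweedler h (\<lambda>x e. sweedler x (\<lambda>c d. S c * (d * S e)))"
    by (subst antipode_eq_sweedler) (simp add: mult.assoc)
  also have "\<dots> = sweedler h (\<lambda>c w. sweedler w (\<lambda>d e. S c * (d * S e)))"
    by (rule sweedler_coassoc[OF vector_space_sc]) (rule lin_map_intros)+
  finally show ?thesis by (simp add: eps_t_def sweedler_mult_left)
qed

lemma antipode_mult_expand:
  "S (h * g) = sweedler h (\<lambda>a v. sweedler g (\<lambda>c w. S c * S a * eps_t (v * w)))"
proof -
  have "S (h * g) = sweedler h (\<lambda>h1 h2. sweedler g (\<lambda>g1 g2. eps_s (h1 * g1) * S (h2 * g2)))"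
    by (subst antipode_eq_eps_s_mult)
      (rule sweedler_mult[OF vector_space_sc], (rule lin_map_intros)+)
  also have "\<dots> =
        sweedler h (\<lambda>h1 h2. sweedler g (\<lambda>g1 g2. sweedler g1 (\<lambda>c d. S c * eps_s h1 * d * S (h2 * g2))))"
    by (simp add: eps_s_mult sweedler_mult_right)
  also have "\<dots> =
        sweedler h (\<lambda>h1 h2. sweedler g (\<lambda>c w. sweedler w (\<lambda>d e. S c * eps_s h1 * d * S (h2 * e))))"
    by (rule sweedler_cong, rule sweedler_coassoc[OF vector_space_sc]) (rule lin_map_intros)+
  also have "\<dots> = sweedler h (\<lambda>h1 h2. sweedler h1
      (\<lambda>a b. sweedler g (\<lambda>c w. sweedler w (\<lambda>d e. S c * (S a * b) * d * S (h2 * e)))))"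
    by (rule sweedler_cong)
      (rule lin_map_eps_s[where G="\<lambda>z. sweedler g (\<lambda>c w. sweedler w (\<lambda>d e. S c * z * d * S (h2 * e)))" for h2],
        (rule lin_map_intros)+)
  also have "\<dots> = sweedler h (\<lambda>a v. sweedler v
      (\<lambda>b f. sweedler g (\<lambda>c w. sweedler w (\<lambda>d e. S c * (S a * b) * d * S (f * e)))))"
    by (rule sweedler_coassoc[OF vector_space_sc]) (rule lin_map_intros)+
  also have "\<dots> = sweedler h (\<lambda>a v. sweedler g (\<lambda>c w. S c * S a * eps_t (v * w)))"
    by (subst sweedler_swap)
      (simp add: eps_t_def sweedler_mult[OF vector_space_sc bilinear_map_mult_antipode] sweedler_mult_left mult.assoc)
  finally show ?thesis .
qed

lemma antipode_mult_eps_t: "sweedler h (\<lambda>a v. S a * eps_t (v * w)) = eps_t w * S h"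
proof -
  have "sweedler h (\<lambda>a v. S a * eps_t (v * w)) = sweedler h (\<lambda>a v. sweedler v (\<lambda>b f. S a * b * (eps_t w * S f)))"
    by (simp add: eps_t_mult sweedler_mult_left mult.assoc)
  also have "\<dots> = sweedler h (\<lambda>x f. sweedler x (\<lambda>a b. S a * b * (eps_t w * S f)))"
    by (rule sweedler_coassoc[OF vector_space_sc, symmetric]) (rule lin_map_intros)+
  also have "\<dots> = sweedler h (\<lambda>x f. eps_s x * eps_t w * S f)"
    by (rule sweedler_cong) (simp add: eps_s_def sweedler_mult_right, simp add: mult.assoc)
  also have "\<dots> = sweedler h (\<lambda>x f. eps_t w * (eps_s x * S f))"
    by (simp add: eps_s_eps_t_commute mult.assoc[symmetric])
  also have "\<dots> = eps_t w * S h"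
    by (simp add: sweedler_mult_left antipode_eq_eps_s_mult[symmetric])
  finally show ?thesis .
qed

lemma antipode_mult: "S (h * g) = S g * S h"
proof -
  have "S (h * g) = sweedler g (\<lambda>c w. S c * sweedler h (\<lambda>a v. S a * eps_t (v * w)))"
    by (subst antipode_mult_expand, subst sweedler_swap) (simp add: sweedler_mult_left mult.assoc)
  also have "\<dots> = S g * S h"
    by (simp add: antipode_mult_eps_t sweedler_mult_right mult.assoc[symmetric] antipode_eq_mult_eps_t[symmetric])
  finally show ?thesis .
qed

lemma antipode_eps_s: "S (eps_s z) = eps_t (eps_s z)"
proof -
  have "eps_t (eps_s z) = sweedler 1 (\<lambda>p q. p * S (eps_s z * q))"
    unfolding eps_t_def by (rule sweedler_eps_s[OF vector_space_sc bilinear_map_mult_antipode])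
  also have "\<dots> = eps_t 1 * S (eps_s z)"
    by (simp add: eps_t_def antipode_mult sweedler_mult_right mult.assoc[symmetric])
  finally show ?thesis by (simp add: eps_t_one)
qed

lemma antipode_eps_t: "S (eps_t g) = eps_s (eps_t g)"
proof -
  have "eps_s (eps_t g) = sweedler 1 (\<lambda>p q. S (p * eps_t g) * q)"
    unfolding eps_s_def by (rule sweedler_eps_t[OF vector_space_sc bilinear_map_antipode_mult])
  also have "\<dots> = S (eps_t g) * eps_s 1"
    by (simp add: eps_s_def antipode_mult sweedler_mult_left mult.assoc)
  finally show ?thesis by (simp add: eps_s_one)
qed

lemma sweedler_one_eps_s_eps_t:
  assumes vs: "vector_space s" and F: "bilinear_map sc s F"
  shows "sweedler 1 (\<lambda>x y. F (eps_s x) (eps_t y)) = sweedler 1 F"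
proof -
  have "bilinear_map sc s (\<lambda>x y. F x (eps_t y))"
    by (assumption | rule lin_map_intros bilinear_map_comp_left[OF F] bilinear_map_comp_right[OF F] vs)+
  from sweedler_eps_s_left[OF vs this, of 1]
  have "sweedler 1 (\<lambda>x y. F (eps_s x) (eps_t y)) = sweedler 1 (\<lambda>x y. F x (eps_t y))" by simp
  also have "\<dots> = sweedler 1 F"
    using sweedler_eps_t_right[OF vs F, of 1] by simp
  finally show ?thesis .
qed

lemma bilinear_map_eps_t_eps_s:
  assumes vs: "vector_space s" and F: "bilinear_map sc s F"
  shows "F (eps_t u) (eps_s v) = sweedler 1 (\<lambda>p q. sweedler 1 (\<lambda>p' q'. s (\<epsilon> (p * u) * \<epsilon> (v * q')) (F q p')))"
proof -
  have "F (eps_t u) (eps_s v) = sweedler 1 (\<lambda>p q. s (\<epsilon> (p * u)) (F q (eps_s v)))"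
    by (rule bilinear_map_eps_t_left[OF F])
  also have "\<dots> =
        sweedler 1 (\<lambda>p q. s (\<epsilon> (p * u)) (sweedler 1 (\<lambda>p' q'. s (\<epsilon> (v * q')) (F q p'))))"
    by (rule sweedler_cong) (simp only: bilinear_map_eps_s_right[OF F])
  finally show ?thesis
    by (simp add: sweedler_scale_fun[OF vs, symmetric] vector_space.vector_space_assms(3)[OF vs])
qed

lemma sweedler_one_counit_weak_mult_left:
  assumes "vector_space s"
  shows "sweedler 1 (\<lambda>x y. s (\<epsilon> (p * x) * \<epsilon> (y * q)) v) = s (\<epsilon> (p * q)) v"
  using sweedler_scale_fun_left[OF assms, of 1 "\<lambda>x y. \<epsilon> (p * x) * \<epsilon> (y * q)"]
    counit_weak_mult_left[of 1 p q] by simp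

lemma sweedler_one_counit_weak_mult_right:
  assumes "vector_space s"
  shows "sweedler 1 (\<lambda>x y. s (\<epsilon> (p * y) * \<epsilon> (x * q)) v) = s (\<epsilon> (p * q)) v"
  using sweedler_scale_fun_left[OF assms, of 1 "\<lambda>x y. \<epsilon> (p * y) * \<epsilon> (x * q)"]
    counit_weak_mult_right[of 1 p q] by simp

text \<open>With 1_1 (x) 1_2 = eps_s(1_1) (x) eps_t(1_2), and S acting as eps_t on eps_s(H) and as eps_s on
  eps_t(H), both sides expand through the counit into the same expression, by the two weak
  multiplicativity laws of the counit.\<close>

lemma sweedler_one_antipode:
  assumes vs: "vector_space s" and F: "bilinear_map sc s F"
  shows "sweedler 1 (\<lambda>x y. F (S x) (S y)) = sweedler 1 (\<lambda>x y. F y x)"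
proof -
  note LF = bilinear_map_comp_left[OF F] bilinear_map_comp_right[OF F]
  define G where "G = (\<lambda>u v. sweedler 1 (\<lambda>p q. sweedler 1 (\<lambda>p' q'. s (\<epsilon> (p * u) * \<epsilon> (v * q')) (F q p'))))"
  have G: "bilinear_map sc s G" unfolding G_def by (assumption | rule lin_map_intros LF vs)+
  have G_eq: "sweedler 1 G = sweedler 1 (\<lambda>x y. G y x)"
    unfolding G_def
    by (subst (1 2) sweedler_swap, rule sweedler_cong, subst (1 2) sweedler_swap)
      (simp add: sweedler_one_counit_weak_mult_left[OF vs] sweedler_one_counit_weak_mult_right[OF vs])
  have "sweedler 1 (\<lambda>x y. F (S x) (S y)) = sweedler 1 (\<lambda>x y. F (S (eps_s x)) (S (eps_t y)))"
    by (rule sweedler_one_eps_s_eps_t[OF vs, symmetric]) (assumption | rule lin_map_intros LF vs)+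
  also have "\<dots> = sweedler 1 (\<lambda>x y. G (eps_s x) (eps_t y))"
    unfolding G_def by (simp add: antipode_eps_s antipode_eps_t bilinear_map_eps_t_eps_s[OF vs F])
  also have "\<dots> = sweedler 1 (\<lambda>x y. G y x)"
    by (simp add: sweedler_one_eps_s_eps_t[OF vs G] G_eq)
  also have "\<dots> = sweedler 1 (\<lambda>x y. F (eps_t y) (eps_s x))"
    unfolding G_def by (simp add: bilinear_map_eps_t_eps_s[OF vs F])
  also have "\<dots> = sweedler 1 (\<lambda>x y. F y x)"
    by (rule sweedler_one_eps_s_eps_t[OF vs]) (assumption | rule lin_map_intros LF vs)+
  finally show ?thesis .
qed

lemma sweedler_one_eps_s_mult:
  assumes vs: "vector_space s" and G: "bilinear_map sc s G"
  shows "sweedler x (\<lambda>x1 x2. sweedler x1 (\<lambda>a b. sweedler x2 (\<lambda>c d. G (S b * c) (S a * d))))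
    = sweedler 1 (\<lambda>p q. G p (eps_s x * q))"
proof -
  note LF = bilinear_map_comp_left[OF G] bilinear_map_comp_right[OF G]
  have "sweedler x (\<lambda>x1 x2. sweedler x1 (\<lambda>a b. sweedler x2 (\<lambda>c d. G (S b * c) (S a * d)))) =
        sweedler x (\<lambda>a w. sweedler w (\<lambda>b y. sweedler y (\<lambda>c d. G (S b * c) (S a * d))))"
    by (rule sweedler_coassoc[OF vs]) (assumption | rule lin_map_intros LF vs)+
  also have "\<dots> =
        sweedler x (\<lambda>a w. sweedler w (\<lambda>z d. sweedler z (\<lambda>b c. G (S b * c) (S a * d))))"
    by (rule sweedler_cong)
      (rule sweedler_coassoc[OF vs, symmetric], (assumption | rule lin_map_intros LF vs)+)
  also have "\<dots> = sweedler x (\<lambda>a w. sweedler w (\<lambda>z d. G (eps_s z) (S a * d)))"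
    by (intro sweedler_cong)
      (rule lin_map_eps_s[where G="\<lambda>t. G t (S a * d)" for a d, symmetric],
        (assumption | rule lin_map_intros LF vs)+)
  also have "\<dots> = sweedler x (\<lambda>a w. sweedler 1 (\<lambda>p q. G p (S a * (w * q))))"
    by (rule sweedler_cong)
      (rule sweedler_eps_s_left[OF vs, where F="\<lambda>P Q. G P (S a * Q)" for a],
        (assumption | rule lin_map_intros LF vs)+)
  also have "\<dots> = sweedler 1 (\<lambda>p q. sweedler x (\<lambda>a w. G p (S a * (w * q))))"
    by (rule sweedler_swap)
  also have "\<dots> = sweedler 1 (\<lambda>p q. sweedler x (\<lambda>a w. G p (S a * w * q)))"
    by (simp only: mult.assoc)
  also have "\<dots> = sweedler 1 (\<lambda>p q. G p (eps_s x * q))"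
    by (rule sweedler_cong)
      (rule lin_map_eps_s[where G="\<lambda>t. G p (t * q)" for p q, symmetric],
        (assumption | rule lin_map_intros LF vs)+)
  finally show ?thesis .
qed

lemma sweedler_one_mult_eps_t:
  assumes vs: "vector_space s" and G: "bilinear_map sc s G"
  shows "sweedler w (\<lambda>w1 w2. sweedler w1 (\<lambda>a b. sweedler w2 (\<lambda>c d. G (a * S d) (b * S c))))
    = sweedler 1 (\<lambda>p q. G (p * eps_t w) q)"
proof -
  note LF = bilinear_map_comp_left[OF G] bilinear_map_comp_right[OF G]
  have "sweedler w (\<lambda>w1 w2. sweedler w1 (\<lambda>a b. sweedler w2 (\<lambda>c d. G (a * S d) (b * S c)))) =
        sweedler w (\<lambda>w1 w2. sweedler w2 (\<lambda>c d. sweedler w1 (\<lambda>a b. G (a * S d) (b * S c))))"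
    by (rule sweedler_cong) (rule sweedler_swap)
  also have "\<dots> =
        sweedler w (\<lambda>y d. sweedler y (\<lambda>w1 c. sweedler w1 (\<lambda>a b. G (a * S d) (b * S c))))"
    by (rule sweedler_coassoc[OF vs, symmetric]) (assumption | rule lin_map_intros LF vs)+
  also have "\<dots> =
        sweedler w (\<lambda>y d. sweedler y (\<lambda>a z. sweedler z (\<lambda>b c. G (a * S d) (b * S c))))"
    by (rule sweedler_cong)
      (rule sweedler_coassoc[OF vs], (assumption | rule lin_map_intros LF vs)+)
  also have "\<dots> = sweedler w (\<lambda>y d. sweedler y (\<lambda>a z. G (a * S d) (eps_t z)))"
    by (intro sweedler_cong)
      (rule lin_map_eps_t[where G="\<lambda>t. G (a * S d) t" for a d, symmetric],
        (assumption | rule lin_map_intros LF vs)+)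
  also have "\<dots> = sweedler w (\<lambda>y d. sweedler 1 (\<lambda>p q. G (p * y * S d) q))"
    by (rule sweedler_cong)
      (rule sweedler_eps_t_right[OF vs, where F="\<lambda>P Q. G (P * S d) Q" for d],
        (assumption | rule lin_map_intros LF vs)+)
  also have "\<dots> = sweedler 1 (\<lambda>p q. sweedler w (\<lambda>y d. G (p * y * S d) q))"
    by (rule sweedler_swap)
  also have "\<dots> = sweedler 1 (\<lambda>p q. sweedler w (\<lambda>y d. G (p * (y * S d)) q))"
    by (simp only: mult.assoc)
  also have "\<dots> = sweedler 1 (\<lambda>p q. G (p * eps_t w) q)"
    by (rule sweedler_cong)
      (rule lin_map_eps_t[where G="\<lambda>t. G (p * t) q" for p q, symmetric],
        (assumption | rule lin_map_intros LF vs)+)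
  finally show ?thesis .
qed

lemma sweedler_antipode_eq_eps_t:
  assumes vs: "vector_space s" and F: "bilinear_map sc s F"
  shows "sweedler (S h) F
    = sweedler h (\<lambda>x w. sweedler x (\<lambda>a b. sweedler (eps_t w) (\<lambda>P Q. F (S b * P) (S a * Q))))"
proof -
  note LF = bilinear_map_comp_left[OF F] bilinear_map_comp_right[OF F]
  have "sweedler (S h) F = sweedler h (\<lambda>x y. sweedler x (\<lambda>a b. sweedler (S a * b * S y) F))"
    by (rule lin_map_apply_antipode) (assumption | rule lin_map_intros LF vs)+
  also have "\<dots> = sweedler h (\<lambda>x y. sweedler x (\<lambda>a b.
      sweedler (S a * b) (\<lambda>u v. sweedler (S y) (\<lambda>c d. F (u * c) (v * d)))))"
    by (intro sweedler_cong) (rule sweedler_mult[OF vs], (assumption | rule lin_map_intros LF vs)+)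
  also have "\<dots> = sweedler h (\<lambda>x y. sweedler (eps_s x) (\<lambda>u v. sweedler (S y) (\<lambda>c d. F (u * c) (v * d))))"
    by (intro sweedler_cong)
      (rule lin_map_eps_s[where G="\<lambda>z. sweedler z (\<lambda>u v. sweedler (S y) (\<lambda>c d. F (u * c) (v * d)))"
          for y, symmetric],
        (assumption | rule lin_map_intros LF vs)+)
  also have "\<dots> = sweedler h (\<lambda>x y. sweedler 1 (\<lambda>p q. sweedler (S y) (\<lambda>c d. F (p * c) (eps_s x * q * d))))"
    by (intro sweedler_cong) (rule sweedler_eps_s[OF vs], (assumption | rule lin_map_intros LF vs)+)
  also have "\<dots> = sweedler h (\<lambda>x y. sweedler x (\<lambda>x1 x2. sweedler x1 (\<lambda>a b.
      sweedler x2 (\<lambda>c' d'. sweedler (S y) (\<lambda>c d. F (S b * c' * c) (S a * d' * d))))))"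
    by (intro sweedler_cong)
      (rule sweedler_one_eps_s_mult[OF vs, where G="\<lambda>P Q. sweedler (S y) (\<lambda>c d. F (P * c) (Q * d))"
          for y, symmetric],
        (assumption | rule lin_map_intros LF vs)+)
  also have "\<dots> = sweedler h (\<lambda>x w. sweedler w (\<lambda>x2 y. sweedler x (\<lambda>a b.
      sweedler x2 (\<lambda>c' d'. sweedler (S y) (\<lambda>c d. F (S b * (c' * c)) (S a * (d' * d)))))))"
    unfolding mult.assoc by (rule sweedler_coassoc[OF vs]) (assumption | rule lin_map_intros LF vs)+
  also have "\<dots> = sweedler h (\<lambda>x w. sweedler x (\<lambda>a b.
      sweedler w (\<lambda>x2 y. sweedler (x2 * S y) (\<lambda>P Q. F (S b * P) (S a * Q)))))"
    by (subst sweedler_swap, intro sweedler_cong)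
      (rule sweedler_mult[OF vs, symmetric], (assumption | rule lin_map_intros LF vs)+)
  also have "\<dots> = sweedler h (\<lambda>x w. sweedler x (\<lambda>a b. sweedler (eps_t w) (\<lambda>P Q. F (S b * P) (S a * Q))))"
    by (intro sweedler_cong)
      (rule lin_map_eps_t[where G="\<lambda>z. sweedler z (\<lambda>P Q. F (S b * P) (S a * Q))" for a b, symmetric],
        (assumption | rule lin_map_intros LF vs)+)
  finally show ?thesis .
qed

lemma sweedler_antipode_eq_one_eps_s:
  assumes vs: "vector_space s" and F: "bilinear_map sc s F"
  shows "sweedler (S h) F
    = sweedler h (\<lambda>v w. sweedler 1 (\<lambda>p q. sweedler w (\<lambda>c d. F (p * S d) (eps_s v * q * S c))))"
proof -
  note LF = bilinear_map_comp_left[OF F] bilinear_map_comp_right[OF F]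
  have "sweedler (S h) F
      = sweedler h (\<lambda>x w. sweedler x (\<lambda>a b. sweedler 1 (\<lambda>p q. F (S b * (p * eps_t w)) (S a * q))))"
    by (subst sweedler_antipode_eq_eps_t[OF vs F], intro sweedler_cong)
      (rule sweedler_eps_t[OF vs], (assumption | rule lin_map_intros LF vs)+)
  also have "\<dots> = sweedler h (\<lambda>x w. sweedler x (\<lambda>a b. sweedler w (\<lambda>w1 w2.
      sweedler w1 (\<lambda>a' b'. sweedler w2 (\<lambda>c d. F (S b * (a' * S d)) (S a * (b' * S c)))))))"
    by (intro sweedler_cong)
      (rule sweedler_one_mult_eps_t[OF vs, where G="\<lambda>P Q. F (S b * P) (S a * Q)" for a b, symmetric],
        (assumption | rule lin_map_intros LF vs)+)
  also have "\<dots> = sweedler h (\<lambda>x w. sweedler w (\<lambda>w1 w2. sweedler x (\<lambda>a b.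
      sweedler w1 (\<lambda>a' b'. sweedler w2 (\<lambda>c d. F (S b * (a' * S d)) (S a * (b' * S c)))))))"
    by (rule sweedler_cong) (rule sweedler_swap)
  also have "\<dots> = sweedler h (\<lambda>v w2. sweedler v (\<lambda>x w1. sweedler x (\<lambda>a b.
      sweedler w1 (\<lambda>a' b'. sweedler w2 (\<lambda>c d. F (S b * a' * S d) (S a * b' * S c))))))"
    unfolding mult.assoc by (rule sweedler_coassoc[OF vs, symmetric]) (assumption | rule lin_map_intros LF vs)+
  also have "\<dots> = sweedler h (\<lambda>v w. sweedler 1 (\<lambda>p q. sweedler w (\<lambda>c d. F (p * S d) (eps_s v * q * S c))))"
    by (rule sweedler_cong)
      (rule sweedler_one_eps_s_mult[OF vs, where G="\<lambda>P Q. sweedler w (\<lambda>c d. F (P * S d) (Q * S c))" for w],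
        (assumption | rule lin_map_intros LF vs)+)
  finally show ?thesis .
qed

lemma sweedler_antipode:
  assumes vs: "vector_space s" and F: "bilinear_map sc s F"
  shows "sweedler (S h) F = sweedler h (\<lambda>x y. F (S y) (S x))"
proof -
  note LF = bilinear_map_comp_left[OF F] bilinear_map_comp_right[OF F]
  have "sweedler (S h) F
      = sweedler h (\<lambda>v w. sweedler 1 (\<lambda>p q. sweedler w (\<lambda>c d. F (S q * S d) (eps_s v * S p * S c))))"
    by (subst sweedler_antipode_eq_one_eps_s[OF vs F], rule sweedler_cong)
      (rule sweedler_one_antipode[OF vs, where F="\<lambda>q p. sweedler w (\<lambda>c d. F (p * S d) (eps_s v * q * S c))"
          for v w, symmetric],
        (assumption | rule lin_map_intros LF vs)+)
  also have "\<dots> = sweedler h (\<lambda>v w. sweedler w (\<lambda>c d. sweedler 1 (\<lambda>p q. F (S (d * q)) (eps_s v * S (c * p)))))"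
    by (simp add: antipode_mult mult.assoc) (rule sweedler_cong, rule sweedler_swap)
  also have "\<dots> = sweedler h (\<lambda>v w. sweedler w (\<lambda>c d. F (S d) (eps_s v * S c)))"
    by (rule sweedler_cong)
      (rule sweedler_mult_one[OF vs, where F="\<lambda>P Q. F (S Q) (eps_s v * S P)" for v],
        (assumption | rule lin_map_intros LF vs)+)
  also have "\<dots> = sweedler h (\<lambda>v w. sweedler w (\<lambda>c d. sweedler v (\<lambda>a b. F (S d) (S a * b * S c))))"
    by (intro sweedler_cong)
      (rule lin_map_eps_s[where G="\<lambda>z. F (S d) (z * S c)" for c d], (assumption | rule lin_map_intros LF vs)+)
  also have "\<dots> = sweedler h (\<lambda>x d. sweedler x (\<lambda>v c. sweedler v (\<lambda>a b. F (S d) (S a * b * S c))))"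
    by (rule sweedler_coassoc[OF vs, symmetric]) (assumption | rule lin_map_intros LF vs)+
  also have "\<dots> = sweedler h (\<lambda>x d. F (S d) (S x))"
    by (rule sweedler_cong)
      (rule lin_map_apply_antipode[where G="\<lambda>z. F (S d) z" for d, symmetric],
        (assumption | rule lin_map_intros LF vs)+)
  finally show ?thesis .
qed

end

locale weak_hopf_algebra_bij = weak_hopf_algebra +
  assumes bij_antipode: "bij S"
begin

lemma antipode_inv_antipode [simp]: "S (inv S x) = x"
  using bij_antipode by (simp add: bij_def surj_f_inv_f)

lemma inv_antipode_antipode [simp]: "inv S (S x) = x"
  using bij_antipode by (simp add: bij_def inv_f_f)

lemma lin_map_inv_antipode: "lin_map sc sc (inv S)"
  using lin_map_antipode unfolding lin_map_def by (metis antipode_inv_antipode inv_antipode_antipode)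

lemma lin_map_inv_antipode_comp [lin_map_intros]: "lin_map sc sc g \<Longrightarrow> lin_map sc sc (\<lambda>x. inv S (g x))"
  using lin_map_inv_antipode by (simp add: lin_map_def)

lemma sweedler_antipode_mult_right:
  assumes vs: "vector_space s" and F: "bilinear_map sc s F"
  shows "sweedler k (\<lambda>x y. F x (S y * h))
    = sweedler h (\<lambda>x y. sweedler (inv S x * k) (\<lambda>c d. F (y * c) (S d)))"
proof -
  note LF = bilinear_map_comp_left[OF F] bilinear_map_comp_right[OF F]
  obtain g where h: "h = S g" using antipode_inv_antipode by metis
  have "sweedler (S g) (\<lambda>x y. sweedler (inv S x * k) (\<lambda>c d. F (y * c) (S d)))
      = sweedler g (\<lambda>a b. sweedler (inv S (S b) * k) (\<lambda>c d. F (S a * c) (S d)))"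
    by (rule sweedler_antipode[OF vs]) (assumption | rule lin_map_intros LF vs)+
  also have "\<dots> =
        sweedler g (\<lambda>a b. sweedler b (\<lambda>b1 b2. sweedler k (\<lambda>k1 k2. F (S a * (b1 * k1)) (S (b2 * k2)))))"
    by (simp only: inv_antipode_antipode)
      (rule sweedler_cong, rule sweedler_mult[OF vs], (assumption | rule lin_map_intros LF vs)+)
  also have "\<dots> =
        sweedler g (\<lambda>x b2. sweedler x (\<lambda>a b1. sweedler k (\<lambda>k1 k2. F (S a * (b1 * k1)) (S (b2 * k2)))))"
    by (rule sweedler_coassoc[OF vs, symmetric]) (assumption | rule lin_map_intros LF vs)+
  also have "\<dots> =
        sweedler g (\<lambda>x b2. sweedler x (\<lambda>a b1. sweedler k (\<lambda>k1 k2. F (S a * b1 * k1) (S (b2 * k2)))))"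
    by (simp only: mult.assoc)
  also have "\<dots> =
        sweedler g (\<lambda>x b2. sweedler k (\<lambda>k1 k2. F (eps_s x * k1) (S (b2 * k2))))"
    by (rule sweedler_cong)
      (rule lin_map_eps_s[where G="\<lambda>z. sweedler k (\<lambda>k1 k2. F (z * k1) (S (b2 * k2)))" for b2, symmetric],
        (assumption | rule lin_map_intros LF vs)+)
  also have "\<dots> = sweedler 1 (\<lambda>p q. sweedler k (\<lambda>k1 k2. F (p * k1) (S (g * q * k2))))"
    by (rule sweedler_eps_s_left[OF vs, where F="\<lambda>P Q. sweedler k (\<lambda>k1 k2. F (P * k1) (S (Q * k2)))"])
      (assumption | rule lin_map_intros LF vs)+
  also have "\<dots> = sweedler 1 (\<lambda>p q. sweedler k (\<lambda>k1 k2. F (p * k1) (S (q * k2) * S g)))"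
    by (simp add: antipode_mult mult.assoc)
  also have "\<dots> = sweedler k (\<lambda>k1 k2. F k1 (S k2 * S g))"
    by (rule sweedler_one_mult[OF vs, where F="\<lambda>P Q. F P (S Q * S g)"])
      (assumption | rule lin_map_intros LF vs)+
  finally show ?thesis unfolding h by (rule sym)
qed

lemma sweedler_mult_antipode_left:
  assumes vs: "vector_space s" and F: "bilinear_map sc s F"
  shows "sweedler k (\<lambda>x y. F (h * S x) y)
    = sweedler h (\<lambda>x y. sweedler (k * inv S y) (\<lambda>c d. F (S c) (d * x)))"
proof -
  note LF = bilinear_map_comp_left[OF F] bilinear_map_comp_right[OF F]
  obtain g where h: "h = S g" using antipode_inv_antipode by metis
  have "sweedler (S g) (\<lambda>x y. sweedler (k * inv S y) (\<lambda>c d. F (S c) (d * x)))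
      = sweedler g (\<lambda>a b. sweedler (k * inv S (S a)) (\<lambda>c d. F (S c) (d * S b)))"
    by (rule sweedler_antipode[OF vs]) (assumption | rule lin_map_intros LF vs)+
  also have "\<dots> =
        sweedler g (\<lambda>a b. sweedler k (\<lambda>k1 k2. sweedler a (\<lambda>a1 a2. F (S (k1 * a1)) (k2 * a2 * S b))))"
    by (simp only: inv_antipode_antipode)
      (rule sweedler_cong, rule sweedler_mult[OF vs], (assumption | rule lin_map_intros LF vs)+)
  also have "\<dots> =
        sweedler g (\<lambda>a b. sweedler a (\<lambda>a1 a2. sweedler k (\<lambda>k1 k2. F (S (k1 * a1)) (k2 * a2 * S b))))"
    by (rule sweedler_cong) (rule sweedler_swap)
  also have "\<dots> =
        sweedler g (\<lambda>a1 w. sweedler w (\<lambda>a2 b. sweedler k (\<lambda>k1 k2. F (S (k1 * a1)) (k2 * a2 * S b))))"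
    by (rule sweedler_coassoc[OF vs]) (assumption | rule lin_map_intros LF vs)+
  also have "\<dots> =
        sweedler g (\<lambda>a1 w. sweedler w (\<lambda>a2 b. sweedler k (\<lambda>k1 k2. F (S (k1 * a1)) (k2 * (a2 * S b)))))"
    by (simp only: mult.assoc)
  also have "\<dots> =
        sweedler g (\<lambda>a1 w. sweedler k (\<lambda>k1 k2. F (S (k1 * a1)) (k2 * eps_t w)))"
    by (rule sweedler_cong)
      (rule lin_map_eps_t[where G="\<lambda>z. sweedler k (\<lambda>k1 k2. F (S (k1 * a1)) (k2 * z))" for a1, symmetric],
        (assumption | rule lin_map_intros LF vs)+)
  also have "\<dots> = sweedler 1 (\<lambda>p q. sweedler k (\<lambda>k1 k2. F (S (k1 * (p * g))) (k2 * q)))"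
    by (rule sweedler_eps_t_right[OF vs, where F="\<lambda>P Q. sweedler k (\<lambda>k1 k2. F (S (k1 * P)) (k2 * Q))"])
      (assumption | rule lin_map_intros LF vs)+
  also have "\<dots> = sweedler 1 (\<lambda>p q. sweedler k (\<lambda>k1 k2. F (S g * S (k1 * p)) (k2 * q)))"
    by (simp add: antipode_mult mult.assoc)
  also have "\<dots> = sweedler k (\<lambda>k1 k2. sweedler 1 (\<lambda>p q. F (S g * S (k1 * p)) (k2 * q)))"
    by (rule sweedler_swap)
  also have "\<dots> = sweedler k (\<lambda>k1 k2. F (S g * S k1) k2)"
    by (rule sweedler_mult_one[OF vs, where F="\<lambda>P Q. F (S g * S P) Q"])
      (assumption | rule lin_map_intros LF vs)+
  finally show ?thesis unfolding h by (simp add: antipode_mult)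
qed

lemma sweedler_inv_antipode_mult_left:
  assumes vs: "vector_space s" and T: "trilinear_map sc s T"
  shows "sweedler h (\<lambda>x y. sweedler (inv S x * k) (\<lambda>c d. T y c (S d)))
    = sweedler h (\<lambda>x y. sweedler (inv S y) (\<lambda>a b. sweedler k (\<lambda>c d. T (S a) (b * c) (S d * x))))"
proof -
  note LF = trilinear_map_comp1[OF T] trilinear_map_comp2[OF T] trilinear_map_comp3[OF T]
  obtain g where h: "h = S g" using antipode_inv_antipode by metis
  have "sweedler (S g) (\<lambda>x y. sweedler (inv S x * k) (\<lambda>c d. T y c (S d)))
      = sweedler g (\<lambda>a b. sweedler (inv S (S b) * k) (\<lambda>c d. T (S a) c (S d)))"
    by (rule sweedler_antipode[OF vs]) (assumption | rule lin_map_intros LF vs)+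
  also have "\<dots> =
        sweedler g (\<lambda>a b. sweedler b (\<lambda>b1 b2. sweedler k (\<lambda>k1 k2. T (S a) (b1 * k1) (S (b2 * k2)))))"
    by (simp only: inv_antipode_antipode)
      (rule sweedler_cong, rule sweedler_mult[OF vs], (assumption | rule lin_map_intros LF vs)+)
  also have "\<dots> =
        sweedler g (\<lambda>a w. sweedler w (\<lambda>b b'. sweedler k (\<lambda>c d. T (S a) (b * c) (S d * S b'))))"
    by (simp add: antipode_mult)
  also have "\<dots> =
        sweedler g (\<lambda>a' b'. sweedler a' (\<lambda>a b. sweedler k (\<lambda>c d. T (S a) (b * c) (S d * S b'))))"
    by (rule sweedler_coassoc[OF vs, symmetric]) (assumption | rule lin_map_intros LF vs)+
  also have "\<dots> =
        sweedler (S g) (\<lambda>x y. sweedler (inv S y) (\<lambda>a b. sweedler k (\<lambda>c d. T (S a) (b * c) (S d * x))))"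
    by (subst sweedler_antipode[OF vs]) ((assumption | rule lin_map_intros LF vs)+, simp)
  finally show ?thesis unfolding h by simp
qed

lemma sweedler_mult_inv_antipode_right:
  assumes vs: "vector_space s" and T: "trilinear_map sc s T"
  shows "sweedler h (\<lambda>x y. sweedler (k * inv S y) (\<lambda>c d. T (S c) d x))
    = sweedler h (\<lambda>x y. sweedler k (\<lambda>c d. sweedler (inv S x) (\<lambda>a b. T (y * S c) (d * a) (S b))))"
proof -
  note LF = trilinear_map_comp1[OF T] trilinear_map_comp2[OF T] trilinear_map_comp3[OF T]
  obtain g where h: "h = S g" using antipode_inv_antipode by metis
  have "sweedler (S g) (\<lambda>x y. sweedler (k * inv S y) (\<lambda>c d. T (S c) d x))
      = sweedler g (\<lambda>a b. sweedler (k * inv S (S a)) (\<lambda>c d. T (S c) d (S b)))"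
    by (rule sweedler_antipode[OF vs]) (assumption | rule lin_map_intros LF vs)+
  also have "\<dots> =
        sweedler g (\<lambda>a b. sweedler k (\<lambda>k1 k2. sweedler a (\<lambda>a1 a2. T (S (k1 * a1)) (k2 * a2) (S b))))"
    by (simp only: inv_antipode_antipode)
      (rule sweedler_cong, rule sweedler_mult[OF vs], (assumption | rule lin_map_intros LF vs)+)
  also have "\<dots> =
        sweedler g (\<lambda>a b. sweedler a (\<lambda>a1 a2. sweedler k (\<lambda>c d. T (S a1 * S c) (d * a2) (S b))))"
    by (rule sweedler_cong) (simp add: antipode_mult sweedler_swap[of k])
  also have "\<dots> =
        sweedler g (\<lambda>a' b'. sweedler b' (\<lambda>a b. sweedler k (\<lambda>c d. T (S a' * S c) (d * a) (S b))))"
    by (rule sweedler_coassoc[OF vs]) (assumption | rule lin_map_intros LF vs)+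
  also have "\<dots> =
        sweedler g (\<lambda>a' b'. sweedler k (\<lambda>c d. sweedler b' (\<lambda>a b. T (S a' * S c) (d * a) (S b))))"
    by (rule sweedler_cong) (rule sweedler_swap)
  also have "\<dots> =
        sweedler (S g) (\<lambda>x y. sweedler k (\<lambda>c d. sweedler (inv S x) (\<lambda>a b. T (y * S c) (d * a) (S b))))"
    by (subst sweedler_antipode[OF vs]) ((assumption | rule lin_map_intros LF vs)+, simp)
  finally show ?thesis unfolding h by simp
qed

end

definition fa_eval :: "('h list \<Rightarrow> 'k::comm_ring_1) \<Rightarrow> ('k, 'h) fa \<Rightarrow> 'k" where
  "fa_eval W p = sum_list (map (\<lambda>(c,w). c * W w) p)"

lemma fa_eval_Nil [simp]: "fa_eval W [] = 0"
  by (simp add: fa_eval_def)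

lemma fa_eval_Cons [simp]: "fa_eval W ((c,w) # p) = c * W w + fa_eval W p"
  by (simp add: fa_eval_def)

lemma fa_eval_append [simp]: "fa_eval W (p @ q) = fa_eval W p + fa_eval W q"
  by (simp add: fa_eval_def)

lemma fa_eval_fa_neg [simp]: "fa_eval W (fa_neg p) = - fa_eval W p"
  by (induct p) (auto simp: fa_neg_def fa_eval_def)

lemma fa_eval_fa_sub [simp]: "fa_eval W (fa_sub p q) = fa_eval W p - fa_eval W q"
  by (simp add: fa_sub_def)

lemma fa_eval_fa_sum [simp]: "fa_eval W (fa_sum f xs) = sum_list (map (\<lambda>x. fa_eval W (f x)) xs)"
  by (induct xs) (auto simp: fa_sum_def)

lemma fa_eval_concat: "fa_eval W (concat ps) = sum_list (map (fa_eval W) ps)"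
  by (induct ps) auto

lemma fa_eval_fa_mul:
  "fa_eval W (fa_mul p q) = sum_list (map (\<lambda>(c,u). sum_list (map (\<lambda>(d,v). c * d * W (u @ v)) q)) p)"
  by (simp add: fa_eval_def fa_mul_def sum_list_map_concat split_def comp_def)

lemma sum_list_map_fa_mul:
  "sum_list (map f (fa_mul p q)) = sum_list (map (\<lambda>(c,u). sum_list (map (\<lambda>(d,v). f (c * d, u @ v)) q)) p)"
  by (simp add: fa_mul_def sum_list_map_concat split_def comp_def)

lemma fa_eval_sandwich:
  "fa_eval W (fa_mul [(1,u)] (fa_mul g [(1,v)])) = fa_eval (\<lambda>w. W (u @ w @ v)) g"
  by (simp add: fa_eval_fa_mul fa_eval_def fa_mul_def sum_list_map_concat split_def comp_def)

lemma fa_coeff_Nil: "fa_coeff [] w = 0"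
  by (simp add: fa_coeff_def)

lemma fa_coeff_Cons: "fa_coeff ((c,u) # p) w = (if u = w then c else 0) + fa_coeff p w"
  by (simp add: fa_coeff_def)

lemma fa_coeff_append: "fa_coeff (p @ q) w = fa_coeff p w + fa_coeff q w"
  by (simp add: fa_coeff_def)

definition fa_scale :: "'k::times \<Rightarrow> ('k, 'h) fa \<Rightarrow> ('k, 'h) fa" where
  "fa_scale c p = map (\<lambda>(d,u). (c * d, u)) p"

lemma fa_coeff_fa_scale: "fa_coeff (fa_scale c p) w = (c::'k::comm_ring_1) * fa_coeff p w"
  by (induct p) (auto simp: fa_scale_def fa_coeff_Cons fa_coeff_Nil algebra_simps)

lemma fa_scale_fa_mul: "fa_scale c (fa_mul a b) = fa_mul (fa_scale (c::'k::comm_ring_1) a) b"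
  by (simp add: fa_scale_def fa_mul_def map_concat split_def comp_def mult.assoc)

lemma fa_scale_in_fa_ideal: "p \<in> fa_ideal G \<Longrightarrow> fa_scale c p \<in> fa_ideal G"
proof (induct rule: fa_ideal.induct)
  case zero
  then show ?case by (simp add: fa_scale_def fa_ideal.zero)
next
  case (gen_mul g a b)
  then show ?case by (simp add: fa_scale_fa_mul fa_ideal.gen_mul)
next
  case (add p q)
  then show ?case by (simp add: fa_scale_def fa_ideal.add)
next
  case (eq p q)
  then show ?case using fa_ideal.eq by (metis fa_eq_def fa_coeff_fa_scale)
qed

definition coeff_scale :: "'k::field \<Rightarrow> ('h list \<Rightarrow> 'k) \<Rightarrow> ('h list \<Rightarrow> 'k)" where
  "coeff_scale c f = (\<lambda>w. c * f w)"

lemma vector_space_coeff_scale: "vector_space (coeff_scale :: 'k::field \<Rightarrow> ('h list \<Rightarrow> 'k) \<Rightarrow> _)"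
  by unfold_locales (auto simp: coeff_scale_def algebra_simps)

lemma subspace_fa_coeff_fa_ideal:
  "module.subspace (coeff_scale :: 'k::field \<Rightarrow> _) (fa_coeff ` fa_ideal (G :: ('k, 'h) fa set))"
proof -
  interpret vector_space "coeff_scale :: 'k \<Rightarrow> ('h list \<Rightarrow> 'k) \<Rightarrow> _"
    by (rule vector_space_coeff_scale)
  show ?thesis unfolding subspace_def
  proof safe
    show "0 \<in> fa_coeff ` fa_ideal G"
      by (rule image_eqI[of _ _ "[]"]) (auto simp: fa_coeff_Nil fun_eq_iff fa_ideal.zero)
  next
    fix p q assume "p \<in> fa_ideal G" "q \<in> fa_ideal G"
    then show "fa_coeff p + fa_coeff q \<in> fa_coeff ` fa_ideal G"
      by (intro image_eqI[of _ _ "p @ q"]) (auto simp: fa_coeff_append fun_eq_iff fa_ideal.add)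
  next
    fix c and p :: "('k, 'h) fa" assume "p \<in> fa_ideal G"
    then show "coeff_scale c (fa_coeff p) \<in> fa_coeff ` fa_ideal G"
      by (intro image_eqI[of _ _ "fa_scale c p"])
        (auto simp: fa_coeff_fa_scale fun_eq_iff coeff_scale_def fa_scale_in_fa_ideal)
  qed
qed

lemma fa_eval_functional:
  fixes \<phi> :: "('h list \<Rightarrow> 'k::field) \<Rightarrow> 'k" and p :: "('k, 'h) fa"
  assumes \<phi>: "lin_map coeff_scale (*) \<phi>"
  shows "fa_eval (\<lambda>w. \<phi> (fa_coeff [(1,w)])) p = \<phi> (fa_coeff p)"
proof (induct p)
  case Nil
  have "fa_coeff ([] :: ('k, 'h) fa) = 0" by (simp add: fa_coeff_Nil fun_eq_iff)
  then show ?case using lin_map_zero[OF \<phi>] by (metis fa_eval_Nil)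
next
  case (Cons x p)
  obtain c u where x: "x = (c,u)" by fastforce
  have "fa_coeff ((c,u) # p) = coeff_scale c (fa_coeff [(1,u)]) + fa_coeff p"
    by (simp add: fun_eq_iff fa_coeff_Cons fa_coeff_Nil coeff_scale_def)
  then have "\<phi> (fa_coeff ((c,u) # p)) = c * \<phi> (fa_coeff [(1,u)]) + \<phi> (fa_coeff p)"
    using \<phi> by (simp add: lin_map_def)
  then show ?case using Cons x by simp
qed

definition annihilates :: "('k::field, 'h) fa set \<Rightarrow> ('h list \<Rightarrow> 'k) \<Rightarrow> bool" where
  "annihilates G W \<longleftrightarrow> (\<forall>g\<in>G. \<forall>u v. fa_eval W (fa_mul [(1,u)] (fa_mul g [(1,v)])) = 0)"

text \<open>If p - q lies outside the ideal, a linear functional on coefficient functions separates it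
  from the ideal; its values on single words form an annihilating W on which p and q differ.\<close>

lemma fa_sub_in_fa_ideal:
  assumes agree: "\<And>W. annihilates G W \<Longrightarrow> fa_eval W p = fa_eval W q"
  shows "fa_sub p q \<in> fa_ideal (G :: ('k::field, 'h) fa set)"
proof (rule ccontr)
  assume nin: "fa_sub p q \<notin> fa_ideal G"
  have "fa_coeff (fa_sub p q) \<notin> fa_coeff ` fa_ideal G"
  proof
    assume "fa_coeff (fa_sub p q) \<in> fa_coeff ` fa_ideal G"
    then obtain r where "r \<in> fa_ideal G" "fa_coeff (fa_sub p q) = fa_coeff r" by blast
    then have "fa_sub p q \<in> fa_ideal G" by (metis fa_ideal.eq fa_eq_def)
    with nin show False by blast
  qed
  then obtain \<phi> where \<phi>: "Vector_Spaces.linear coeff_scale (*) \<phi>"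
      "\<forall>u\<in>fa_coeff ` fa_ideal G. \<phi> u = 0" "\<phi> (fa_coeff (fa_sub p q)) = 1"
    using exists_functional_separating_subspace[OF vector_space_coeff_scale subspace_fa_coeff_fa_ideal]
    by blast
  define W where "W = (\<lambda>w. \<phi> (fa_coeff [(1::'k, w)]))"
  have eval_W: "fa_eval W r = \<phi> (fa_coeff r)" for r
    unfolding W_def by (rule fa_eval_functional) (use \<phi>(1) in \<open>simp add: linear_iff_lin_map\<close>)
  have "annihilates G W"
    unfolding annihilates_def using \<phi>(2) by (auto simp: eval_W intro: fa_ideal.gen_mul)
  then have "fa_eval W p = fa_eval W q" by (rule agree)
  then have "\<phi> (fa_coeff (fa_sub p q)) = 0" by (metis eval_W fa_eval_fa_sub diff_self)
  with \<phi>(3) show False by simp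
qed

lemma annihilates_sandwich: "annihilates G W \<Longrightarrow> g \<in> G \<Longrightarrow> fa_eval (\<lambda>w. W (u @ w @ v)) g = 0"
  unfolding annihilates_def by (simp add: fa_eval_sandwich[symmetric])

lemma annihilates_lin_rels_lin_map:
  assumes W: "annihilates G W" and G: "lin_rels sc \<subseteq> G"
  shows "lin_map sc (*) (\<lambda>a. W (u @ [a] @ v))"
proof -
  have "fa_sub (gen (a + b)) (gen a @ gen b) \<in> G" for a b
    using G unfolding lin_rels_def by blast
  from annihilates_sandwich[OF W this, of u v]
  have add: "W (u @ [a + b] @ v) = W (u @ [a] @ v) + W (u @ [b] @ v)" for a b
    by (simp add: gen_def)
  have "fa_sub (gen (sc c a)) [(c, [a])] \<in> G" for c a
    using G unfolding lin_rels_def by blast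
  from annihilates_sandwich[OF W this, of u v]
  have "W (u @ [sc c a] @ v) = c * W (u @ [a] @ v)" for c a
    by (simp add: gen_def)
  with add show ?thesis unfolding lin_map_def by simp
qed

lemma annihilates_lin_rels_bilinear_map:
  assumes "annihilates G W" and "lin_rels sc \<subseteq> G"
  shows "bilinear_map sc (*) (\<lambda>p q. W [p, q])"
  using annihilates_lin_rels_lin_map[OF assms, of "[]" "[_]"] annihilates_lin_rels_lin_map[OF assms, of "[_]" "[]"]
  by (intro bilinear_mapI) simp_all

lemma annihilates_lin_rels_trilinear_map:
  assumes "annihilates G W" and "lin_rels sc \<subseteq> G"
  shows "trilinear_map sc (*) (\<lambda>p q r. W [p, q, r])"
  using annihilates_lin_rels_lin_map[OF assms, of "[]" "[_, _]"] annihilates_lin_rels_lin_map[OF assms, of "[_]" "[_]"]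
    annihilates_lin_rels_lin_map[OF assms, of "[_, _]" "[]"]
  by (intro trilinear_mapI) simp_all

abbreviation parw_gens ::
  "('k::field \<Rightarrow> 'h::ring_1 \<Rightarrow> 'h) \<Rightarrow> ('h \<Rightarrow> ('h \<times> 'h) list) \<Rightarrow> ('h \<Rightarrow> 'h) \<Rightarrow> ('k, 'h) fa set" where
  "parw_gens sc \<Delta> S \<equiv> lin_rels sc \<union> parw_rels \<Delta> S"

context comultiplication
begin

lemma annihilates_parw_gens_sum:
  assumes W: "annihilates (parw_gens sc \<Delta> S) W"
    and gen: "fa_sum (\<lambda>(x,y). fa_sub [(1, A x y)] [(1, B x y)]) (\<Delta> k) \<in> parw_gens sc \<Delta> S"
  shows "sweedler k (\<lambda>x y. W (u @ A x y @ v)) = sweedler k (\<lambda>x y. W (u @ B x y @ v))"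
  using annihilates_sandwich[OF W gen, of u v]
  by (intro sweedler_eq_if_diff_zero) (simp add: sweedler_def split_def comp_def)

lemma annihilates_parw_mult_E:
  "annihilates (parw_gens sc \<Delta> S) W
    \<Longrightarrow> sweedler k (\<lambda>x y. W (u @ [h, x, S y] @ v)) = sweedler k (\<lambda>x y. W (u @ [h * x, S y] @ v))"
  by (rule annihilates_parw_gens_sum) (auto simp: parw_rels_def)

lemma annihilates_parw_mult_Et:
  "annihilates (parw_gens sc \<Delta> S) W
    \<Longrightarrow> sweedler k (\<lambda>x y. W (u @ [h, S x, y] @ v)) = sweedler k (\<lambda>x y. W (u @ [h * S x, y] @ v))"
  by (rule annihilates_parw_gens_sum) (auto simp: parw_rels_def)

lemma annihilates_parw_E_mult:
  "annihilates (parw_gens sc \<Delta> S) W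
    \<Longrightarrow> sweedler h (\<lambda>x y. W (u @ [x, S y, k] @ v)) = sweedler h (\<lambda>x y. W (u @ [x, S y * k] @ v))"
  by (rule annihilates_parw_gens_sum) (auto simp: parw_rels_def)

lemma annihilates_parw_Et_mult:
  "annihilates (parw_gens sc \<Delta> S) W
    \<Longrightarrow> sweedler h (\<lambda>x y. W (u @ [S x, y, k] @ v)) = sweedler h (\<lambda>x y. W (u @ [S x, y * k] @ v))"
  by (rule annihilates_parw_gens_sum) (auto simp: parw_rels_def)

lemmas fa_eval_simps = sum_list_map_fa_mul fa_eval_fa_mul fa_eval_concat E_el_def Et_el_def gen_def
  fa_sum_def sweedler_def sum_list_map_concat split_def comp_def

lemma fa_eval_E_gen: "fa_eval W (fa_mul (E_el \<Delta> S k) (gen h)) = sweedler k (\<lambda>x y. W [x, S y, h])"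
  by (simp add: fa_eval_simps)

lemma fa_eval_gen_Et: "fa_eval W (fa_mul (gen h) (Et_el \<Delta> S k)) = sweedler k (\<lambda>x y. W [h, S x, y])"
  by (simp add: fa_eval_simps)

lemma fa_eval_sum_gen_E:
  "fa_eval W (fa_sum (\<lambda>(x,y). fa_mul (gen y) (E_el \<Delta> S (f x))) (\<Delta> h))
    = sweedler h (\<lambda>x y. sweedler (f x) (\<lambda>c d. W [y, c, S d]))"
  by (simp add: fa_eval_simps)

lemma fa_eval_sum_Et_gen:
  "fa_eval W (fa_sum (\<lambda>(x,y). fa_mul (Et_el \<Delta> S (f y)) (gen x)) (\<Delta> h))
    = sweedler h (\<lambda>x y. sweedler (f y) (\<lambda>c d. W [S c, d, x]))"
  by (simp add: fa_eval_simps)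

lemma fa_eval_sum_Et_E_gen:
  "fa_eval W (fa_sum (\<lambda>(x,y). fa_mul (Et_el \<Delta> S (f y)) (fa_mul (E_el \<Delta> S k) (gen x))) (\<Delta> h))
    = sweedler h (\<lambda>x y. sweedler (f y) (\<lambda>a b. sweedler k (\<lambda>c d. W [S a, b, c, S d, x])))"
  by (simp add: fa_eval_simps)

lemma fa_eval_sum_gen_Et_E:
  "fa_eval W (fa_sum (\<lambda>(x,y). fa_mul (gen y) (fa_mul (Et_el \<Delta> S k) (E_el \<Delta> S (f x)))) (\<Delta> h))
    = sweedler h (\<lambda>x y. sweedler k (\<lambda>c d. sweedler (f x) (\<lambda>a b. W [y, S c, d, a, S b])))"
  by (simp add: fa_eval_simps)

end

context weak_hopf_algebra_bij
begin

lemma lin_rels_subset_parw_gens: "lin_rels sc \<subseteq> parw_gens sc \<Delta> S"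
  by blast

lemma fa_eval_E_gen_annihilates:
  assumes W: "annihilates (parw_gens sc \<Delta> S) W"
  shows "fa_eval W (fa_mul (E_el \<Delta> S k) (gen h))
    = sweedler h (\<lambda>x y. sweedler (inv S x * k) (\<lambda>c d. W [y, c, S d]))"
proof -
  note W2 = annihilates_lin_rels_bilinear_map[OF W lin_rels_subset_parw_gens]
  have "fa_eval W (fa_mul (E_el \<Delta> S k) (gen h)) = sweedler k (\<lambda>x y. W [x, S y, h])"
    by (rule fa_eval_E_gen)
  also have "\<dots> = sweedler k (\<lambda>x y. W [x, S y * h])"
    using annihilates_parw_E_mult[OF W, where u="[]" and v="[]"] by simp
  also have "\<dots> = sweedler h (\<lambda>x y. sweedler (inv S x * k) (\<lambda>c d. W [y * c, S d]))"
    by (rule sweedler_antipode_mult_right[OF vector_space_field_mult W2])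
  also have "\<dots> = sweedler h (\<lambda>x y. sweedler (inv S x * k) (\<lambda>c d. W [y, c, S d]))"
    using annihilates_parw_mult_E[OF W, where u="[]" and v="[]"] by simp
  finally show ?thesis .
qed

lemma fa_eval_gen_Et_annihilates:
  assumes W: "annihilates (parw_gens sc \<Delta> S) W"
  shows "fa_eval W (fa_mul (gen h) (Et_el \<Delta> S k))
    = sweedler h (\<lambda>x y. sweedler (k * inv S y) (\<lambda>c d. W [S c, d, x]))"
proof -
  note W2 = annihilates_lin_rels_bilinear_map[OF W lin_rels_subset_parw_gens]
  have "fa_eval W (fa_mul (gen h) (Et_el \<Delta> S k)) = sweedler k (\<lambda>x y. W [h, S x, y])"
    by (rule fa_eval_gen_Et)
  also have "\<dots> = sweedler k (\<lambda>x y. W [h * S x, y])"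
    using annihilates_parw_mult_Et[OF W, where u="[]" and v="[]"] by simp
  also have "\<dots> = sweedler h (\<lambda>x y. sweedler (k * inv S y) (\<lambda>c d. W [S c, d * x]))"
    by (rule sweedler_mult_antipode_left[OF vector_space_field_mult W2])
  also have "\<dots> = sweedler h (\<lambda>x y. sweedler (k * inv S y) (\<lambda>c d. W [S c, d, x]))"
    using annihilates_parw_Et_mult[OF W, where u="[]" and v="[]"] by simp
  finally show ?thesis .
qed

lemma parw_E_gen_commute:
  "parw_eq sc \<Delta> S (fa_mul (E_el \<Delta> S k) (gen h))
     (fa_sum (\<lambda>(x,y). fa_mul (gen y) (E_el \<Delta> S (inv S x * k))) (\<Delta> h))"
  unfolding parw_eq_def
  by (rule fa_sub_in_fa_ideal) (simp only: fa_eval_E_gen_annihilates fa_eval_sum_gen_E)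

lemma parw_gen_Et_commute:
  "parw_eq sc \<Delta> S (fa_mul (gen h) (Et_el \<Delta> S k))
     (fa_sum (\<lambda>(x,y). fa_mul (Et_el \<Delta> S (k * inv S y)) (gen x)) (\<Delta> h))"
  unfolding parw_eq_def
  by (rule fa_sub_in_fa_ideal) (simp only: fa_eval_gen_Et_annihilates fa_eval_sum_Et_gen)

lemma parw_E_gen_eq_Et_E_gen:
  "parw_eq sc \<Delta> S (fa_mul (E_el \<Delta> S k) (gen h))
     (fa_sum (\<lambda>(x,y). fa_mul (Et_el \<Delta> S (inv S y)) (fa_mul (E_el \<Delta> S k) (gen x))) (\<Delta> h))"
  unfolding parw_eq_def
proof (rule fa_sub_in_fa_ideal)
  fix W assume W: "annihilates (parw_gens sc \<Delta> S) W"
  note W3 = annihilates_lin_rels_trilinear_map[OF W lin_rels_subset_parw_gens]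
  have "fa_eval W (fa_sum (\<lambda>(x,y). fa_mul (Et_el \<Delta> S (inv S y)) (fa_mul (E_el \<Delta> S k) (gen x))) (\<Delta> h))
      = sweedler h (\<lambda>x y. sweedler (inv S y) (\<lambda>a b. sweedler k (\<lambda>c d. W [S a, b, c, S d, x])))"
    by (rule fa_eval_sum_Et_E_gen)
  also have "\<dots> =
        sweedler h (\<lambda>x y. sweedler (inv S y) (\<lambda>a b. sweedler k (\<lambda>c d. W [S a, b, c, S d * x])))"
    using annihilates_parw_E_mult[OF W, where u="[_, _]" and v="[]"] by simp
  also have "\<dots> =
        sweedler h (\<lambda>x y. sweedler k (\<lambda>c d. sweedler (inv S y) (\<lambda>a b. W [S a, b, c, S d * x])))"
    by (rule sweedler_cong) (rule sweedler_swap)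
  also have "\<dots> =
        sweedler h (\<lambda>x y. sweedler k (\<lambda>c d. sweedler (inv S y) (\<lambda>a b. W [S a, b * c, S d * x])))"
    using annihilates_parw_Et_mult[OF W, where u="[]" and v="[_]"] by simp
  also have "\<dots> =
        sweedler h (\<lambda>x y. sweedler (inv S y) (\<lambda>a b. sweedler k (\<lambda>c d. W [S a, b * c, S d * x])))"
    by (rule sweedler_cong) (rule sweedler_swap)
  also have "\<dots> = sweedler h (\<lambda>x y. sweedler (inv S x * k) (\<lambda>c d. W [y, c, S d]))"
    by (rule sweedler_inv_antipode_mult_left[OF vector_space_field_mult W3, symmetric])
  also have "\<dots> = fa_eval W (fa_mul (E_el \<Delta> S k) (gen h))"
    by (rule fa_eval_E_gen_annihilates[OF W, symmetric])
  finally show "fa_eval W (fa_mul (E_el \<Delta> S k) (gen h))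
    = fa_eval W (fa_sum (\<lambda>(x,y). fa_mul (Et_el \<Delta> S (inv S y)) (fa_mul (E_el \<Delta> S k) (gen x))) (\<Delta> h))"
    by (rule sym)
qed

lemma parw_gen_Et_eq_gen_Et_E:
  "parw_eq sc \<Delta> S (fa_mul (gen h) (Et_el \<Delta> S k))
     (fa_sum (\<lambda>(x,y). fa_mul (gen y) (fa_mul (Et_el \<Delta> S k) (E_el \<Delta> S (inv S x)))) (\<Delta> h))"
  unfolding parw_eq_def
proof (rule fa_sub_in_fa_ideal)
  fix W assume W: "annihilates (parw_gens sc \<Delta> S) W"
  note W3 = annihilates_lin_rels_trilinear_map[OF W lin_rels_subset_parw_gens]
  have "fa_eval W (fa_sum (\<lambda>(x,y). fa_mul (gen y) (fa_mul (Et_el \<Delta> S k) (E_el \<Delta> S (inv S x)))) (\<Delta> h))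
      = sweedler h (\<lambda>x y. sweedler k (\<lambda>c d. sweedler (inv S x) (\<lambda>a b. W [y, S c, d, a, S b])))"
    by (rule fa_eval_sum_gen_Et_E)
  also have "\<dots> =
        sweedler h (\<lambda>x y. sweedler (inv S x) (\<lambda>a b. sweedler k (\<lambda>c d. W [y, S c, d, a, S b])))"
    by (rule sweedler_cong) (rule sweedler_swap)
  also have "\<dots> =
        sweedler h (\<lambda>x y. sweedler (inv S x) (\<lambda>a b. sweedler k (\<lambda>c d. W [y * S c, d, a, S b])))"
    using annihilates_parw_mult_Et[OF W, where u="[]" and v="[_, _]"] by simp
  also have "\<dots> =
        sweedler h (\<lambda>x y. sweedler k (\<lambda>c d. sweedler (inv S x) (\<lambda>a b. W [y * S c, d, a, S b])))"
    by (rule sweedler_cong) (rule sweedler_swap)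
  also have "\<dots> =
        sweedler h (\<lambda>x y. sweedler k (\<lambda>c d. sweedler (inv S x) (\<lambda>a b. W [y * S c, d * a, S b])))"
    using annihilates_parw_mult_E[OF W, where u="[_]" and v="[]"] by simp
  also have "\<dots> = sweedler h (\<lambda>x y. sweedler (k * inv S y) (\<lambda>c d. W [S c, d, x]))"
    by (rule sweedler_mult_inv_antipode_right[OF vector_space_field_mult W3, symmetric])
  also have "\<dots> = fa_eval W (fa_mul (gen h) (Et_el \<Delta> S k))"
    by (rule fa_eval_gen_Et_annihilates[OF W, symmetric])
  finally show "fa_eval W (fa_mul (gen h) (Et_el \<Delta> S k))
    = fa_eval W (fa_sum (\<lambda>(x,y). fa_mul (gen y) (fa_mul (Et_el \<Delta> S k) (E_el \<Delta> S (inv S x)))) (\<Delta> h))"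
    by (rule sym)
qed

end

theorem proposition4p5:
  fixes sc :: "'k::field \<Rightarrow> 'h::ring_1 \<Rightarrow> 'h"
    and \<Delta> :: "'h \<Rightarrow> ('h \<times> 'h) list"
    and \<epsilon> :: "'h \<Rightarrow> 'k"
    and S :: "'h \<Rightarrow> 'h"
  assumes "weak_hopf sc \<Delta> \<epsilon> S"
    and "bij S"
  shows
    "(\<forall>h k. parw_eq sc \<Delta> S
        (fa_mul (E_el \<Delta> S k) (gen h))
        (fa_sum (\<lambda>(x,y). fa_mul (gen y) (E_el \<Delta> S (inv S x * k))) (\<Delta> h)))
   \<and> (\<forall>h k. parw_eq sc \<Delta> S
        (fa_mul (gen h) (Et_el \<Delta> S k))
        (fa_sum (\<lambda>(x,y). fa_mul (Et_el \<Delta> S (k * inv S y)) (gen x)) (\<Delta> h)))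
   \<and> (\<forall>h k. parw_eq sc \<Delta> S
        (fa_mul (E_el \<Delta> S k) (gen h))
        (fa_sum (\<lambda>(x,y). fa_mul (Et_el \<Delta> S (inv S y)) (fa_mul (E_el \<Delta> S k) (gen x))) (\<Delta> h)))
   \<and> (\<forall>h k. parw_eq sc \<Delta> S
        (fa_mul (gen h) (Et_el \<Delta> S k))
        (fa_sum (\<lambda>(x,y). fa_mul (gen y) (fa_mul (Et_el \<Delta> S k) (E_el \<Delta> S (inv S x)))) (\<Delta> h)))"
proof -
  interpret weak_hopf_algebra_bij sc \<Delta> \<epsilon> S
    using assms by (simp add: weak_hopf_algebra_bij_def weak_hopf_algebra_def weak_hopf_algebra_bij_axioms_def)
  show ?thesis
    using parw_E_gen_commute parw_gen_Et_commute parw_E_gen_eq_Et_E_gen parw_gen_Et_eq_gen_Et_E by blast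
qed

end
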